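(* For every $\varepsilon\in(0,1)$ there exists $C(\varepsilon)>0$ such that the following holds. Assume $N \ge C(\varepsilon)n$ and let $x_1,\ldots,x_N$ be independent standard Gaussian random vectors in $\mathbb{R}^n$. Then $$\mathrm{conv}(x_1,\ldots,x_N) \supset \sqrt{2\log\Big(\frac{N}{n}\Big)(1-\varepsilon)}\cdot B(n)$$ with probability at least $1-e^{-n}$, where $B(n)$ is the unit Euclidean ball in $\mathbb{R}^n$ centered at the origin. *)

theory Defs
  imports "HOL-Probability.Probability"
begin

text \<open>Vectors of R^n are represented as functions nat => real, of which only the
coordinates j < n are relevant.  A family of N points x_0, ..., x_(N-1) in R^n is a
function x :: nat => nat => real, point i having coordinates x i j for j < n.\<close>

definition conv_pts :: "nat \<Rightarrow> nat \<Rightarrow> (nat \<Rightarrow> nat \<Rightarrow> real) \<Rightarrow> (nat \<Rightarrow> real) set" where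
  "conv_pts n N x = {y. \<exists>l :: nat \<Rightarrow> real. (\<forall>i<N. 0 \<le> l i) \<and> (\<Sum>i<N. l i) = 1 \<and>
                        (\<forall>j<n. y j = (\<Sum>i<N. l i * x i j))}"

definition ball_n :: "nat \<Rightarrow> real \<Rightarrow> (nat \<Rightarrow> real) set" where
  "ball_n n r = {y. sqrt (\<Sum>j<n. (y j)\<^sup>2) \<le> r}"

definition subset_n :: "nat \<Rightarrow> (nat \<Rightarrow> real) set \<Rightarrow> (nat \<Rightarrow> real) set \<Rightarrow> bool" where
  "subset_n n A B = (\<forall>y\<in>A. \<exists>z\<in>B. \<forall>j<n. y j = z j)"

definition std_gauss :: "nat \<Rightarrow> (nat \<Rightarrow> real) measure" where
  "std_gauss n = PiM {..<n} (\<lambda>_. std_normal_distribution)"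

definition gauss_sample :: "nat \<Rightarrow> nat \<Rightarrow> (nat \<Rightarrow> nat \<Rightarrow> real) measure" where
  "gauss_sample n N = PiM {..<N} (\<lambda>_. std_gauss n)"

end

theory Submission
  imports Defs "HOL-Real_Asymp.Real_Asymp"
begin

(* By separation, conv(x_1, ..., x_N) contains r B(n) iff every direction \<theta> has
   max_i <x_i, \<theta>> \<ge> r |\<theta>|.  Take a \<delta>-net of the sphere with e^(O(n log(1/\<delta>))) points.
   For a net point u the values <x_i, u> are i.i.d. centred Gaussians, each exceeding
   t = s (1 - \<delta>) with probability q \<approx> e^(-s^2/2) / s, so with overwhelming probability
   at least n of them do.  Moreover, for every n-subset S the sum over S of <x_i, u> is
   Gaussian with variance about n, hence below B n; this bounds the norm of the sum of the
   x_i over S by about B n and lets one pass from u to any nearby unit vector \<theta> at cost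
   B n \<delta> / (1 - \<delta>).  Choosing s^2 = 2 (1 - \<epsilon>/2) log(N/n), the union bound over the net and the
   subsets is at most e^(-n) once N/n is large. *)

section \<open>Inner product and norm of coordinate vectors\<close>

definition inner_n :: "nat \<Rightarrow> (nat \<Rightarrow> real) \<Rightarrow> (nat \<Rightarrow> real) \<Rightarrow> real" where
  "inner_n n a b = (\<Sum>j<n. a j * b j)"

definition norm_n :: "nat \<Rightarrow> (nat \<Rightarrow> real) \<Rightarrow> real" where
  "norm_n n a = sqrt (\<Sum>j<n. (a j)\<^sup>2)"

lemma norm_n_eq_L2_set: "norm_n n a = L2_set a {..<n}"
  by (simp add: norm_n_def L2_set_def)

lemma norm_n_nonneg [simp]: "0 \<le> norm_n n a"
  by (simp add: norm_n_eq_L2_set)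

lemma ball_n_iff: "y \<in> ball_n n r \<longleftrightarrow> norm_n n y \<le> r"
  by (simp add: ball_n_def norm_n_def)

lemma norm_n_power2: "(norm_n n a)\<^sup>2 = (\<Sum>j<n. (a j)\<^sup>2)"
  unfolding norm_n_def by (simp add: sum_nonneg)

lemma inner_n_self: "inner_n n a a = (norm_n n a)\<^sup>2"
  unfolding norm_n_power2 inner_n_def by (simp add: power2_eq_square)

lemma inner_n_commute: "inner_n n a b = inner_n n b a"
  by (simp add: inner_n_def mult.commute)

lemma abs_inner_n_le: "\<bar>inner_n n a b\<bar> \<le> norm_n n a * norm_n n b"
proof -
  have "\<bar>inner_n n a b\<bar> \<le> (\<Sum>j<n. \<bar>a j\<bar> * \<bar>b j\<bar>)"
    unfolding inner_n_def by (metis (no_types, lifting) abs_mult sum.cong sum_abs)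
  also have "\<dots> \<le> norm_n n a * norm_n n b"
    unfolding norm_n_eq_L2_set by (rule L2_set_mult_ineq)
  finally show ?thesis .
qed

lemma inner_n_le: "inner_n n a b \<le> norm_n n a * norm_n n b"
  using abs_inner_n_le[of n a b] by linarith

lemma norm_n_triangle: "norm_n n (\<lambda>j. a j + b j) \<le> norm_n n a + norm_n n b"
  unfolding norm_n_eq_L2_set by (rule L2_set_triangle_ineq)

lemma inner_n_cong:
  "(\<And>j. j < n \<Longrightarrow> a j = a' j) \<Longrightarrow> (\<And>j. j < n \<Longrightarrow> b j = b' j) \<Longrightarrow> inner_n n a b = inner_n n a' b'"
  unfolding inner_n_def by (auto intro!: sum.cong)

lemma norm_n_scale: "norm_n n (\<lambda>j. c * a j) = \<bar>c\<bar> * norm_n n a"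
  unfolding norm_n_def by (simp add: power_mult_distrib sum_distrib_left[symmetric] real_sqrt_mult)

lemma inner_n_scale_right: "inner_n n a (\<lambda>j. c * b j) = c * inner_n n a b"
  unfolding inner_n_def by (simp add: sum_distrib_left algebra_simps)

lemma inner_n_diff_right: "inner_n n a (\<lambda>j. b j - c j) = inner_n n a b - inner_n n a c"
  unfolding inner_n_def by (simp add: sum_subtractf algebra_simps)

lemma inner_n_sum_left: "inner_n n (\<lambda>j. \<Sum>i\<in>S. f i j) b = (\<Sum>i\<in>S. inner_n n (f i) b)"
  unfolding inner_n_def by (simp add: sum_distrib_right sum.swap[of _ S])

lemma norm_n_eq_0_iff: "norm_n n a = 0 \<longleftrightarrow> (\<forall>j<n. a j = 0)"
  unfolding norm_n_eq_L2_set by (subst L2_set_eq_0_iff) auto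

lemma inner_n_eq_0_if_norm_n_eq_0: "norm_n n b = 0 \<Longrightarrow> inner_n n a b = 0"
  by (simp add: norm_n_eq_0_iff inner_n_def)

lemma norm_n_normalize: "norm_n n a \<noteq> 0 \<Longrightarrow> norm_n n (\<lambda>j. a j / norm_n n a) = 1"
  using norm_n_scale[of n "1 / norm_n n a" a] by simp

lemma abs_le_norm_n:
  assumes "j < n" shows "\<bar>a j\<bar> \<le> norm_n n a"
proof -
  have "(a j)\<^sup>2 \<le> (\<Sum>i<n. (a i)\<^sup>2)" using assms by (intro member_le_sum) auto
  then show ?thesis unfolding norm_n_def by (metis real_sqrt_abs real_sqrt_le_mono)
qed

lemma norm_n_diff_commute: "norm_n n (\<lambda>j. a j - b j) = norm_n n (\<lambda>j. b j - a j)"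
  unfolding norm_n_def by (simp add: power2_commute)

section \<open>Convex hulls containing a ball\<close>

text \<open>Weights are forced to vanish outside {..<N} so that the simplex is compact in the product
  topology of nat \<Rightarrow> real.\<close>

definition simplex_n :: "nat \<Rightarrow> (nat \<Rightarrow> real) set" where
  "simplex_n N = {l. (\<forall>i. l i \<in> (if i < N then {0..1} else {0})) \<and> (\<Sum>i<N. l i) = 1}"

lemma compact_simplex_n: "compact (simplex_n N)"
proof -
  have "compactin (product_topology (\<lambda>i. euclidean) UNIV) (PiE UNIV (\<lambda>i. if i < N then {0..1::real} else {0}))"
    by (subst compactin_PiE) auto
  then have "compact (PiE UNIV (\<lambda>i. if i < N then {0..1::real} else {0}))"
    by (simp add: euclidean_product_topology)
  moreover have "closed {l::nat\<Rightarrow>real. (\<Sum>i<N. l i) = 1}"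
    by (intro closed_Collect_eq continuous_intros continuous_on_product_coordinates)
  moreover have "simplex_n N = PiE UNIV (\<lambda>i. if i < N then {0..1} else {0}) \<inter> {l. (\<Sum>i<N. l i) = 1}"
    by (auto simp: simplex_n_def PiE_def Pi_def)
  ultimately show ?thesis by (simp add: compact_Int_closed)
qed

lemma nearest_point_conv_pts_exists:
  assumes "N \<ge> 1"
  obtains l where "l \<in> simplex_n N"
    and "\<And>l'. l' \<in> simplex_n N \<Longrightarrow>
           norm_n n (\<lambda>j. y j - (\<Sum>i<N. l i * x i j)) \<le> norm_n n (\<lambda>j. y j - (\<Sum>i<N. l' i * x i j))"
proof -
  have "(\<lambda>i. if i = 0 then 1 else 0) \<in> simplex_n N"
    using assms by (auto simp: simplex_n_def sum.delta)
  then have ne: "simplex_n N \<noteq> {}" by blast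
  have "continuous_on UNIV (\<lambda>l. norm_n n (\<lambda>j. y j - (\<Sum>i<N. l i * x i j)))"
    unfolding norm_n_def by (intro continuous_intros continuous_on_product_coordinates)
  then have "continuous_on (simplex_n N) (\<lambda>l. norm_n n (\<lambda>j. y j - (\<Sum>i<N. l i * x i j)))"
    by (rule continuous_on_subset) simp
  from continuous_attains_inf[OF compact_simplex_n ne this] show ?thesis
    using that by blast
qed

lemma norm_n_diff_scale_power2:
  "(norm_n n (\<lambda>j. a j - s * b j))\<^sup>2 = (norm_n n a)\<^sup>2 - 2 * s * inner_n n b a + s\<^sup>2 * (norm_n n b)\<^sup>2"
proof -
  have "(norm_n n (\<lambda>j. a j - s * b j))\<^sup>2 = (\<Sum>j<n. (a j)\<^sup>2 - 2 * s * (b j * a j) + s\<^sup>2 * (b j)\<^sup>2)"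
    unfolding norm_n_power2 by (intro sum.cong refl) (simp add: power2_eq_square algebra_simps)
  then show ?thesis
    by (simp add: sum.distrib sum_subtractf sum_distrib_left norm_n_power2 inner_n_def)
qed

lemma simplex_n_move_to_vertex:
  assumes l: "l \<in> simplex_n N" and i: "i < N" and s: "0 \<le> s" "s \<le> 1"
  shows "(\<lambda>k. (1 - s) * l k + s * (if k = i then 1 else 0)) \<in> simplex_n N"
proof -
  have "(1 - s) * l k + s * (if k = i then 1 else 0) \<in> (if k < N then {0..1} else {0})" for k
  proof (cases "k < N")
    case True
    then have "0 \<le> l k" "l k \<le> 1" using l by (auto simp: simplex_n_def dest: spec[of _ k])
    then have "0 \<le> (1 - s) * l k" "(1 - s) * l k \<le> 1 - s"
      using s by (auto intro: mult_left_le)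
    then show ?thesis using True s by auto
  next
    case False
    then show ?thesis using l i by (auto simp: simplex_n_def dest: spec[of _ k])
  qed
  moreover have "(\<Sum>k<N. (1 - s) * l k + s * (if k = i then 1 else 0)) = 1"
    using i l by (simp add: simplex_n_def sum.distrib sum_distrib_left[symmetric])
  ultimately show ?thesis by (simp add: simplex_n_def)
qed

text \<open>Moving the nearest point p slightly towards a vertex x i cannot bring it closer to y.\<close>

lemma nearest_point_conv_pts_inner_le:
  fixes x :: "nat \<Rightarrow> nat \<Rightarrow> real" and l :: "nat \<Rightarrow> real" and N :: nat
  defines "p \<equiv> \<lambda>j. \<Sum>k<N. l k * x k j"
  assumes l: "l \<in> simplex_n N"
    and nearest: "\<And>l'. l' \<in> simplex_n N \<Longrightarrow>
           norm_n n (\<lambda>j. y j - p j) \<le> norm_n n (\<lambda>j. y j - (\<Sum>k<N. l' k * x k j))"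
    and i: "i < N"
  shows "inner_n n (x i) (\<lambda>j. y j - p j) \<le> inner_n n p (\<lambda>j. y j - p j)"
proof (rule ccontr)
  define \<theta> where "\<theta> = (\<lambda>j. y j - p j)"
  define w where "w = (\<lambda>j. x i j - p j)"
  define c where "c = inner_n n w \<theta>"
  define D where "D = (norm_n n w)\<^sup>2"
  assume "\<not> ?thesis"
  moreover have "c = inner_n n (x i) \<theta> - inner_n n p \<theta>"
    by (simp add: c_def w_def inner_n_def sum_subtractf left_diff_distrib)
  ultimately have c0: "c > 0" by (simp add: \<theta>_def)
  have D0: "D \<ge> 0" by (simp add: D_def)
  define s where "s = min 1 (c / (D + 1))"
  have s0: "s > 0" and s1: "s \<le> 1" and sc: "s \<le> c / (D + 1)"
    using c0 D0 by (auto simp: s_def)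
  define l' where "l' k = (1 - s) * l k + s * (if k = i then 1 else 0)" for k
  have "l' \<in> simplex_n N"
    unfolding l'_def using s0 s1 by (intro simplex_n_move_to_vertex[OF l i]) auto
  moreover have l'_comb: "(\<Sum>k<N. l' k * x k j) = p j + s * w j" for j
  proof -
    have "(\<Sum>k<N. l' k * x k j) = (\<Sum>k<N. (1 - s) * (l k * x k j) + s * (if k = i then x k j else 0))"
      by (intro sum.cong) (auto simp: l'_def algebra_simps)
    also have "\<dots> = (1 - s) * p j + s * x i j"
      using i by (simp add: sum.distrib sum_distrib_left[symmetric] p_def)
    finally show ?thesis by (simp add: w_def algebra_simps)
  qed
  moreover have "norm_n n (\<lambda>j. y j - (\<Sum>k<N. l' k * x k j)) = norm_n n (\<lambda>j. \<theta> j - s * w j)"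
    unfolding l'_comb by (simp add: \<theta>_def algebra_simps)
  ultimately have "norm_n n \<theta> \<le> norm_n n (\<lambda>j. \<theta> j - s * w j)"
    using nearest[of l'] by (simp add: \<theta>_def)
  then have "(norm_n n \<theta>)\<^sup>2 \<le> (norm_n n (\<lambda>j. \<theta> j - s * w j))\<^sup>2"
    by (intro power_mono) auto
  then have "(norm_n n \<theta>)\<^sup>2 \<le> (norm_n n \<theta>)\<^sup>2 - 2 * s * c + s\<^sup>2 * D"
    unfolding norm_n_diff_scale_power2 c_def D_def .
  then have "2 * c \<le> s * D" using s0 by (simp add: power2_eq_square mult.assoc)
  moreover have "s * D \<le> c / (D + 1) * D" using sc D0 by (rule mult_right_mono)
  moreover have "c / (D + 1) * D \<le> c" using c0 D0 by (simp add: field_simps)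
  ultimately show False using c0 by linarith
qed

lemma ball_subset_conv_pts_if_support:
  fixes x :: "nat \<Rightarrow> nat \<Rightarrow> real"
  assumes N: "N \<ge> 1" and support: "\<And>\<theta>. \<exists>i<N. r * norm_n n \<theta> \<le> inner_n n (x i) \<theta>"
  shows "subset_n n (ball_n n r) (conv_pts n N x)"
  unfolding subset_n_def
proof
  fix y assume "y \<in> ball_n n r"
  then have y: "norm_n n y \<le> r" by (simp add: ball_n_iff)
  obtain l where l: "l \<in> simplex_n N"
    and nearest: "\<And>l'. l' \<in> simplex_n N \<Longrightarrow>
           norm_n n (\<lambda>j. y j - (\<Sum>i<N. l i * x i j)) \<le> norm_n n (\<lambda>j. y j - (\<Sum>i<N. l' i * x i j))"
    using nearest_point_conv_pts_exists[OF N] by blast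
  define p where "p = (\<lambda>j. \<Sum>i<N. l i * x i j)"
  define \<theta> where "\<theta> = (\<lambda>j. y j - p j)"
  have "p \<in> conv_pts n N x"
    using l unfolding conv_pts_def p_def simplex_n_def by (auto intro!: exI[of _ l] split: if_splits)
  moreover have "norm_n n \<theta> = 0"
  proof (rule ccontr)
    assume "norm_n n \<theta> \<noteq> 0"
    then have "0 < (norm_n n \<theta>)\<^sup>2" by simp
    moreover have "inner_n n \<theta> \<theta> = inner_n n \<theta> y - inner_n n \<theta> p"
      by (simp add: \<theta>_def inner_n_def sum_subtractf right_diff_distrib)
    then have "inner_n n p \<theta> = inner_n n y \<theta> - (norm_n n \<theta>)\<^sup>2"
      by (simp add: inner_n_self inner_n_commute[of n \<theta>])
    moreover have "inner_n n y \<theta> \<le> r * norm_n n \<theta>"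
      using inner_n_le[of n y \<theta>] mult_right_mono[OF y norm_n_nonneg[of n \<theta>]] by linarith
    moreover obtain i where "i < N" and "r * norm_n n \<theta> \<le> inner_n n (x i) \<theta>"
      using support by blast
    moreover have "inner_n n (x i) \<theta> \<le> inner_n n p \<theta>"
      using nearest_point_conv_pts_inner_le[OF l _ \<open>i < N\<close>] nearest by (simp add: p_def \<theta>_def)
    ultimately show False by linarith
  qed
  ultimately show "\<exists>z\<in>conv_pts n N x. \<forall>j<n. y j = z j"
    by (auto simp: norm_n_eq_0_iff \<theta>_def)
qed

lemma ex_ge_convex_combination:
  fixes a l :: "nat \<Rightarrow> real"
  assumes l: "\<forall>i<N. 0 \<le> l i" "(\<Sum>i<N. l i) = 1"
  shows "\<exists>i<N. (\<Sum>k<N. l k * a k) \<le> a i"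
proof (rule ccontr)
  assume "\<not> ?thesis"
  then have below: "a i < (\<Sum>k<N. l k * a k)" if "i < N" for i
    using that by auto
  have "\<exists>k<N. l k > 0"
  proof (rule ccontr)
    assume "\<not> (\<exists>k<N. l k > 0)"
    then have "\<forall>i<N. l i = 0" using l by (meson not_less order.antisym)
    then show False using l by simp
  qed
  then obtain k where "k < N" "l k > 0" by blast
  then have "\<exists>k\<in>{..<N}. l k * a k < l k * (\<Sum>k<N. l k * a k)"
    using below by (auto intro!: bexI[of _ k])
  moreover have "\<forall>i\<in>{..<N}. l i * a i \<le> l i * (\<Sum>k<N. l k * a k)"
    using l mult_left_mono[OF less_imp_le[OF below]] by auto
  ultimately have "(\<Sum>i<N. l i * a i) < (\<Sum>i<N. l i * (\<Sum>k<N. l k * a k))"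
    by (intro sum_strict_mono_ex1) auto
  also have "\<dots> = (\<Sum>k<N. l k * a k)" using l by (simp flip: sum_distrib_right)
  finally show False by simp
qed

lemma support_if_ball_subset_conv_pts:
  fixes x :: "nat \<Rightarrow> nat \<Rightarrow> real"
  assumes N: "N \<ge> 1" and r: "r \<ge> 0" and subset: "subset_n n (ball_n n r) (conv_pts n N x)"
  shows "\<exists>i<N. r * norm_n n \<theta> \<le> inner_n n (x i) \<theta>"
proof (cases "norm_n n \<theta> = 0")
  case True
  then show ?thesis using N by (intro exI[of _ 0]) (auto simp: inner_n_eq_0_if_norm_n_eq_0)
next
  case False
  define y where "y = (\<lambda>j. r * (\<theta> j / norm_n n \<theta>))"
  have "y \<in> ball_n n r"
    unfolding ball_n_iff y_def norm_n_scale norm_n_normalize[OF False] using r by simp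
  then obtain z where "z \<in> conv_pts n N x" and yz: "\<forall>j<n. y j = z j"
    using subset unfolding subset_n_def by blast
  then obtain l where l0: "\<forall>i<N. 0 \<le> l i" and l1: "(\<Sum>i<N. l i) = 1"
    and lz: "\<forall>j<n. z j = (\<Sum>i<N. l i * x i j)"
    unfolding conv_pts_def by blast
  have "inner_n n \<theta> y = r / norm_n n \<theta> * inner_n n \<theta> \<theta>"
    unfolding y_def inner_n_def by (simp add: sum_distrib_left mult_ac)
  also have "\<dots> = r * norm_n n \<theta>"
    using False by (simp add: inner_n_self power2_eq_square)
  finally have "inner_n n \<theta> y = r * norm_n n \<theta>" .
  moreover have "inner_n n \<theta> y = inner_n n \<theta> (\<lambda>j. \<Sum>i<N. l i * x i j)"
    using yz lz by (intro inner_n_cong) auto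
  moreover have "\<dots> = (\<Sum>i<N. l i * inner_n n (x i) \<theta>)"
    by (simp add: inner_n_commute[of n \<theta>] inner_n_sum_left) (simp add: inner_n_def sum_distrib_left mult.assoc)
  ultimately have "r * norm_n n \<theta> = (\<Sum>i<N. l i * inner_n n (x i) \<theta>)" by simp
  then show ?thesis using ex_ge_convex_combination[OF l0 l1, of "\<lambda>i. inner_n n (x i) \<theta>"] by simp
qed

lemma ball_subset_conv_pts_iff_support:
  fixes x :: "nat \<Rightarrow> nat \<Rightarrow> real"
  assumes "N \<ge> 1" and "r \<ge> 0"
  shows "subset_n n (ball_n n r) (conv_pts n N x) \<longleftrightarrow> (\<forall>\<theta>. \<exists>i<N. r * norm_n n \<theta> \<le> inner_n n (x i) \<theta>)"
  using ball_subset_conv_pts_if_support support_if_ball_subset_conv_pts assms by blast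

section \<open>Reduction to countably many directions\<close>

lemma floor_grid_approx:
  fixes m t :: real
  assumes "m > 0"
  shows "0 \<le> t - of_int \<lfloor>m * t\<rfloor> / m" and "t - of_int \<lfloor>m * t\<rfloor> / m \<le> 1 / m"
proof -
  have eq: "t - of_int \<lfloor>m * t\<rfloor> / m = (m * t - of_int \<lfloor>m * t\<rfloor>) / m"
    using assms by (simp add: field_simps)
  have "0 \<le> m * t - of_int \<lfloor>m * t\<rfloor>" and "m * t - of_int \<lfloor>m * t\<rfloor> \<le> 1"
    by linarith+
  with assms show "0 \<le> t - of_int \<lfloor>m * t\<rfloor> / m" and "t - of_int \<lfloor>m * t\<rfloor> / m \<le> 1 / m"
    unfolding eq by (simp_all add: divide_right_mono)
qed

definition int_vecs :: "nat \<Rightarrow> (nat \<Rightarrow> int) set" where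
  "int_vecs n = PiE {..<n} (\<lambda>_. UNIV)"

lemma countable_int_vecs: "countable (int_vecs n)"
  unfolding int_vecs_def by (intro countable_PiE) auto

text \<open>Rounding \<theta> down to the grid of mesh 1/m changes both sides of the support condition by
  O(1/m), with a constant depending only on x and r.\<close>

lemma support_approx_from_int_vecs:
  fixes x :: "nat \<Rightarrow> nat \<Rightarrow> real" and m :: nat
  assumes m: "m > 0" and r: "r \<ge> 0"
    and support: "\<forall>k\<in>int_vecs n. \<exists>i<N. r * norm_n n (\<lambda>j. of_int (k j)) \<le> inner_n n (x i) (\<lambda>j. of_int (k j))"
  shows "\<exists>i<N. r * norm_n n \<theta> - ((\<Sum>i<N. \<Sum>j<n. \<bar>x i j\<bar>) + r * n) / m \<le> inner_n n (x i) \<theta>"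
proof -
  define k where "k = restrict (\<lambda>j. \<lfloor>real m * \<theta> j\<rfloor>) {..<n}"
  define u where "u = (\<lambda>j. 1 / real m * of_int (k j))"
  have "k \<in> int_vecs n" by (simp add: k_def int_vecs_def)
  then obtain i where i: "i < N" and hi: "r * norm_n n (\<lambda>j. of_int (k j)) \<le> inner_n n (x i) (\<lambda>j. of_int (k j))"
    using support by blast
  have "r * norm_n n u = 1 / real m * (r * norm_n n (\<lambda>j. of_int (k j)))"
    unfolding u_def norm_n_scale by simp
  also have "\<dots> \<le> 1 / real m * inner_n n (x i) (\<lambda>j. of_int (k j))"
    using hi by (intro mult_left_mono) auto
  also have "\<dots> = inner_n n (x i) u"
    unfolding u_def inner_n_scale_right ..
  finally have hu: "r * norm_n n u \<le> inner_n n (x i) u" .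
  have err: "0 \<le> \<theta> j - u j \<and> \<theta> j - u j \<le> 1 / real m" if "j < n" for j
    using floor_grid_approx[of "real m" "\<theta> j"] m that by (simp add: u_def k_def)
  define c where "c = (\<Sum>j<n. \<bar>x i j\<bar>)"
  have "\<bar>inner_n n (x i) \<theta> - inner_n n (x i) u\<bar> = \<bar>\<Sum>j<n. x i j * (\<theta> j - u j)\<bar>"
    by (simp add: inner_n_def sum_subtractf right_diff_distrib)
  also have "\<dots> \<le> (\<Sum>j<n. \<bar>x i j\<bar> * \<bar>\<theta> j - u j\<bar>)"
    unfolding abs_mult[symmetric] by (rule sum_abs)
  also have "\<dots> \<le> (\<Sum>j<n. \<bar>x i j\<bar> * (1 / real m))"
    using err by (intro sum_mono mult_left_mono) auto
  also have "\<dots> = c / m" by (simp add: c_def sum_divide_distrib)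
  finally have inner_err: "inner_n n (x i) u - c / m \<le> inner_n n (x i) \<theta>" by linarith
  have "norm_n n \<theta> \<le> norm_n n u + norm_n n (\<lambda>j. \<theta> j - u j)"
    using norm_n_triangle[of n u "\<lambda>j. \<theta> j - u j"] by simp
  also have "norm_n n (\<lambda>j. \<theta> j - u j) \<le> (\<Sum>j<n. \<bar>\<theta> j - u j\<bar>)"
    unfolding norm_n_eq_L2_set by (rule L2_set_le_sum_abs)
  also have "\<dots> \<le> (\<Sum>j<n. 1 / real m)" using err by (intro sum_mono) auto
  finally have norm_err: "norm_n n \<theta> \<le> norm_n n u + n / m" by simp
  have "c \<le> (\<Sum>i<N. \<Sum>j<n. \<bar>x i j\<bar>)"
    unfolding c_def using i by (intro member_le_sum) (auto intro: sum_nonneg)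
  then have "c / m \<le> (\<Sum>i<N. \<Sum>j<n. \<bar>x i j\<bar>) / m" by (simp add: divide_right_mono)
  moreover have "r * norm_n n \<theta> \<le> r * norm_n n u + r * n / m"
    using mult_left_mono[OF norm_err r] by (simp add: algebra_simps)
  ultimately show ?thesis
    using i hu inner_err by (intro exI[of _ i]) (auto simp: add_divide_distrib)
qed

lemma support_iff_int_vecs:
  fixes x :: "nat \<Rightarrow> nat \<Rightarrow> real"
  assumes N: "N \<ge> 1" and r: "r \<ge> 0"
  shows "(\<forall>\<theta>. \<exists>i<N. r * norm_n n \<theta> \<le> inner_n n (x i) \<theta>) \<longleftrightarrow>
         (\<forall>k\<in>int_vecs n. \<exists>i<N. r * norm_n n (\<lambda>j. of_int (k j)) \<le> inner_n n (x i) (\<lambda>j. of_int (k j)))"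
proof
  assume support: "\<forall>k\<in>int_vecs n. \<exists>i<N. r * norm_n n (\<lambda>j. of_int (k j)) \<le> inner_n n (x i) (\<lambda>j. of_int (k j))"
  show "\<forall>\<theta>. \<exists>i<N. r * norm_n n \<theta> \<le> inner_n n (x i) \<theta>"
  proof
    fix \<theta> :: "nat \<Rightarrow> real"
    define c where "c = (\<Sum>i<N. \<Sum>j<n. \<bar>x i j\<bar>) + r * n"
    define M where "M = Max ((\<lambda>i. inner_n n (x i) \<theta>) ` {..<N})"
    have M_in: "M \<in> (\<lambda>i. inner_n n (x i) \<theta>) ` {..<N}"
      unfolding M_def using N by (intro Max_in) (auto simp: lessThan_empty_iff)
    have c: "c \<ge> 0" unfolding c_def using r by (intro add_nonneg_nonneg sum_nonneg) auto
    have "r * norm_n n \<theta> \<le> M + e" if e: "e > 0" for e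
    proof -
      obtain m :: nat where m: "c / e < m" using reals_Archimedean2 by blast
      moreover have "0 \<le> c / e" using c e by simp
      ultimately have "m > 0" by linarith
      then obtain i where "i < N" "r * norm_n n \<theta> - c / m \<le> inner_n n (x i) \<theta>"
        using support_approx_from_int_vecs[OF _ r support] by (auto simp: c_def)
      moreover have "c / m \<le> e" using m e \<open>m > 0\<close> by (simp add: field_simps)
      moreover have "inner_n n (x i) \<theta> \<le> M"
        unfolding M_def using \<open>i < N\<close> by (intro Max_ge) auto
      ultimately show ?thesis by linarith
    qed
    then have "r * norm_n n \<theta> \<le> M" by (rule field_le_epsilon)
    then show "\<exists>i<N. r * norm_n n \<theta> \<le> inner_n n (x i) \<theta>" using M_in by auto
  qed
qed auto

section \<open>Gaussian samples\<close>

lemma prob_space_std_normal: "prob_space std_normal_distribution"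
  by (rule prob_space_normal_density) simp

lemma prob_space_std_gauss: "prob_space (std_gauss n)"
  unfolding std_gauss_def by (intro prob_space_PiM prob_space_std_normal)

lemma prob_space_gauss_sample: "prob_space (gauss_sample n N)"
  unfolding gauss_sample_def by (intro prob_space_PiM prob_space_std_gauss)

lemma borel_measurable_std_gauss_coord:
  assumes "j < n" shows "(\<lambda>y. y j) \<in> borel_measurable (std_gauss n)"
proof -
  have "(\<lambda>y. y j) \<in> measurable (std_gauss n) std_normal_distribution"
    unfolding std_gauss_def by (rule measurable_component_singleton) (use assms in simp)
  then show ?thesis by (simp add: measurable_cong_sets[OF refl, of std_normal_distribution borel])
qed

lemma borel_measurable_inner_n_std_gauss: "(\<lambda>y. inner_n n y \<theta>) \<in> borel_measurable (std_gauss n)"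
  unfolding inner_n_def by (intro borel_measurable_sum borel_measurable_times borel_measurable_std_gauss_coord) auto

lemma measurable_gauss_sample_component:
  "i < N \<Longrightarrow> (\<lambda>x. x i) \<in> measurable (gauss_sample n N) (std_gauss n)"
  unfolding gauss_sample_def by (rule measurable_component_singleton) auto

lemma borel_measurable_inner_n_gauss_sample:
  "i < N \<Longrightarrow> (\<lambda>x. inner_n n (x i) \<theta>) \<in> borel_measurable (gauss_sample n N)"
  using measurable_comp[OF measurable_gauss_sample_component borel_measurable_inner_n_std_gauss]
  by (simp add: comp_def)

lemma sets_gauss_sample_ball_subset_conv_pts:
  assumes N: "N \<ge> 1" and r: "r \<ge> 0"
  shows "{x \<in> space (gauss_sample n N). subset_n n (ball_n n r) (conv_pts n N x)} \<in> sets (gauss_sample n N)"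
proof -
  have "{x \<in> space (gauss_sample n N). subset_n n (ball_n n r) (conv_pts n N x)}
      = {x \<in> space (gauss_sample n N). \<forall>k\<in>int_vecs n. \<exists>i\<in>{..<N}.
           r * norm_n n (\<lambda>j. of_int (k j)) \<le> inner_n n (x i) (\<lambda>j. of_int (k j))}"
    using ball_subset_conv_pts_iff_support[OF N r] support_iff_int_vecs[OF N r] by auto
  also have "\<dots> \<in> sets (gauss_sample n N)"
    by (intro sets.sets_Collect_countable_All' countable_int_vecs sets.sets_Collect_finite_Ex
        borel_measurable_le borel_measurable_inner_n_gauss_sample borel_measurable_const) auto
  finally show ?thesis .
qed

lemma indep_vars_PiM_components:
  assumes M: "\<And>i. i \<in> I \<Longrightarrow> prob_space (M i)" and I: "I \<noteq> {}"
  shows "prob_space.indep_vars (PiM I M) M (\<lambda>i x. x i) I"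
proof -
  interpret P: prob_space "PiM I M" by (intro prob_space_PiM M)
  have "distr (PiM I M) (PiM I M) (\<lambda>x. \<lambda>i\<in>I. x i) = distr (PiM I M) (PiM I M) (\<lambda>x. x)"
    by (intro distr_cong) (auto simp: space_PiM PiE_def extensional_restrict)
  also have "\<dots> = PiM I (\<lambda>i. distr (PiM I M) (M i) (\<lambda>x. x i))"
    by (simp add: distr_id distr_PiM_component M cong: PiM_cong)
  finally show ?thesis
    by (intro P.indep_vars_iff_distr_eq_PiM'[OF I measurable_component_singleton, THEN iffD2])
qed

lemma distributed_comp_law:
  assumes X: "X \<in> measurable M M'" and law: "distr M M' X = M'"
    and f: "distributed M' lborel f g"
  shows "distributed M lborel (\<lambda>x. f (X x)) g"
proof -
  have fm: "f \<in> measurable M' lborel" using f by (rule distributed_measurable)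
  have "distr M lborel (\<lambda>x. f (X x)) = distr (distr M M' X) lborel f"
    using distr_distr[OF fm X] by (simp add: comp_def)
  also have "\<dots> = density lborel g" using law f by (simp add: distributed_distr_eq_density)
  finally show ?thesis using f measurable_compose[OF X fm] by (simp add: distributed_def)
qed

lemma sum_indep_normal_PiM:
  assumes M: "\<And>i. i \<in> I \<Longrightarrow> prob_space (M i)" and J: "J \<subseteq> I" "J \<noteq> {}" "finite J"
    and \<sigma>: "\<And>i. i \<in> J \<Longrightarrow> \<sigma> i > 0"
    and f: "\<And>i. i \<in> J \<Longrightarrow> distributed (M i) lborel (f i) (normal_density 0 (\<sigma> i))"
  shows "distributed (PiM I M) lborel (\<lambda>x. \<Sum>i\<in>J. f i (x i)) (normal_density 0 (sqrt (\<Sum>i\<in>J. (\<sigma> i)\<^sup>2)))"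
proof -
  interpret P: prob_space "PiM I M" by (intro prob_space_PiM M)
  have "P.indep_vars M (\<lambda>i x. x i) J"
    using P.indep_vars_subset[OF indep_vars_PiM_components[OF M] J(1)] M J by blast
  then have "P.indep_vars (\<lambda>_. borel) (\<lambda>i x. f i (x i)) J"
    using P.indep_vars_compose2[of M _ J f "\<lambda>_. borel"] f distributed_measurable by fastforce
  moreover have "distributed (PiM I M) lborel (\<lambda>x. f i (x i)) (normal_density 0 (\<sigma> i))" if "i \<in> J" for i
    using that J by (intro distributed_comp_law[OF _ _ f] measurable_component_singleton distr_PiM_component M) auto
  ultimately show ?thesis
    using P.sum_indep_normal[OF J(3,2), of "\<lambda>i x. f i (x i)" \<sigma> "\<lambda>_. 0"] \<sigma> by simp
qed

lemma distributed_std_normal_mult: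
  assumes "a \<noteq> 0"
  shows "distributed std_normal_distribution lborel (\<lambda>t. t * a) (normal_density 0 \<bar>a\<bar>)"
proof -
  have "distributed std_normal_distribution lborel (\<lambda>t. t) std_normal_density"
    unfolding distributed_def by (auto simp: distr_id2)
  from prob_space.normal_density_affine[OF prob_space_std_normal this, where \<alpha>=a and \<beta>=0] assms
  show ?thesis by (simp add: mult.commute)
qed

lemma distributed_inner_n_std_gauss:
  assumes u: "norm_n n u > 0"
  shows "distributed (std_gauss n) lborel (\<lambda>y. inner_n n y u) (normal_density 0 (norm_n n u))"
proof -
  define J where "J = {j\<in>{..<n}. u j \<noteq> 0}"
  have "J \<noteq> {}" using u by (auto simp: J_def norm_n_eq_0_iff[symmetric])
  then have "distributed (PiM {..<n} (\<lambda>_. std_normal_distribution)) lborel (\<lambda>y. \<Sum>j\<in>J. y j * u j)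
         (normal_density 0 (sqrt (\<Sum>j\<in>J. \<bar>u j\<bar>\<^sup>2)))"
    by (intro sum_indep_normal_PiM prob_space_std_normal)
       (auto simp: J_def intro: distributed_std_normal_mult)
  moreover have "(\<lambda>y. \<Sum>j\<in>J. y j * u j) = (\<lambda>y. inner_n n y u)"
    unfolding inner_n_def by (intro ext sum.mono_neutral_left) (auto simp: J_def)
  moreover have "sqrt (\<Sum>j\<in>J. \<bar>u j\<bar>\<^sup>2) = norm_n n u"
    unfolding norm_n_def by (simp, intro sum.mono_neutral_left) (auto simp: J_def)
  ultimately show ?thesis by (simp add: std_gauss_def)
qed

lemma distributed_sum_inner_n_gauss_sample:
  assumes S: "S \<subseteq> {..<N}" "S \<noteq> {}" and u: "norm_n n u > 0"
  shows "distributed (gauss_sample n N) lborel (\<lambda>x. \<Sum>i\<in>S. inner_n n (x i) u)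
           (normal_density 0 (sqrt (card S) * norm_n n u))"
proof -
  have "finite S" using S finite_subset by blast
  then have "distributed (gauss_sample n N) lborel (\<lambda>x. \<Sum>i\<in>S. inner_n n (x i) u)
           (normal_density 0 (sqrt (\<Sum>i\<in>S. (norm_n n u)\<^sup>2)))"
    unfolding gauss_sample_def using S u
    by (intro sum_indep_normal_PiM prob_space_std_gauss distributed_inner_n_std_gauss) auto
  then show ?thesis by (simp add: real_sqrt_mult)
qed

section \<open>Gaussian tail bounds\<close>

lemma nn_integral_normal_density:
  assumes "\<sigma> > 0"
  shows "(\<integral>\<^sup>+x. ennreal (normal_density \<mu> \<sigma> x) \<partial>lborel) = 1"
proof -
  interpret prob_space "density lborel (normal_density \<mu> \<sigma>)"
    by (rule prob_space_normal_density) (use assms in simp)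
  show ?thesis using emeasure_space_1 by (simp add: emeasure_density)
qed

lemma normal_density_le_shifted:
  assumes \<sigma>: "\<sigma> > 0" and c: "0 \<le> c" "c \<le> x"
  shows "normal_density 0 \<sigma> x \<le> exp (- c\<^sup>2 / (2 * \<sigma>\<^sup>2)) * normal_density c \<sigma> x"
proof -
  have "- x\<^sup>2 \<le> - c\<^sup>2 - (x - c)\<^sup>2"
    using mult_nonneg_nonneg[of c "x - c"] c by (simp add: power2_eq_square algebra_simps)
  then have "- x\<^sup>2 / (2 * \<sigma>\<^sup>2) \<le> (- c\<^sup>2 - (x - c)\<^sup>2) / (2 * \<sigma>\<^sup>2)"
    using \<sigma> by (intro divide_right_mono) auto
  then have "exp (- x\<^sup>2 / (2 * \<sigma>\<^sup>2)) \<le> exp (- c\<^sup>2 / (2 * \<sigma>\<^sup>2)) * exp (- (x - c)\<^sup>2 / (2 * \<sigma>\<^sup>2))"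
    by (simp add: exp_add[symmetric] diff_divide_distrib)
  then show ?thesis unfolding normal_density_def
    by (simp add: mult.left_commute[of "exp _"] divide_right_mono)
qed

lemma normal_tail_upper_bound:
  assumes "prob_space M" and X: "distributed M lborel X (normal_density 0 \<sigma>)"
    and \<sigma>: "\<sigma> > 0" and c: "c \<ge> 0"
  shows "measure M {\<omega>\<in>space M. c \<le> X \<omega>} \<le> exp (- c\<^sup>2 / (2 * \<sigma>\<^sup>2))"
proof -
  interpret prob_space M by fact
  have "emeasure M (X -` {c..} \<inter> space M) = (\<integral>\<^sup>+x. ennreal (normal_density 0 \<sigma> x) * indicator {c..} x \<partial>lborel)"
    by (rule distributed_emeasure[OF X]) simp
  also have "\<dots> \<le> (\<integral>\<^sup>+x. ennreal (exp (- c\<^sup>2 / (2 * \<sigma>\<^sup>2))) * ennreal (normal_density c \<sigma> x) \<partial>lborel)"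
  proof (intro nn_integral_mono)
    fix x
    show "ennreal (normal_density 0 \<sigma> x) * indicator {c..} x
        \<le> ennreal (exp (- c\<^sup>2 / (2 * \<sigma>\<^sup>2))) * ennreal (normal_density c \<sigma> x)"
      using normal_density_le_shifted[OF \<sigma> c, of x]
      by (cases "c \<le> x") (simp_all add: ennreal_mult[symmetric] ennreal_leI)
  qed
  also have "\<dots> = ennreal (exp (- c\<^sup>2 / (2 * \<sigma>\<^sup>2)))"
    by (simp add: nn_integral_cmult nn_integral_normal_density[OF \<sigma>])
  finally have "emeasure M {\<omega>\<in>space M. c \<le> X \<omega>} \<le> ennreal (exp (- c\<^sup>2 / (2 * \<sigma>\<^sup>2)))"
    by (simp add: vimage_def Int_def conj_commute)
  then show ?thesis by (simp add: emeasure_eq_measure)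
qed

lemma exp_three_halves_sqrt_2pi_le: "exp (3/2::real) * sqrt (2 * pi) \<le> 27"
proof -
  have "exp (3/2::real) \<le> exp 2" by simp
  also have "exp (2::real) = exp 1 * exp 1" by (simp flip: exp_add)
  also have "\<dots> \<le> 3 * 3" using exp_le by (intro mult_mono) auto
  finally have e: "exp (3/2::real) \<le> 9" by simp
  have "2 * pi \<le> (3::real)\<^sup>2" using pi_less_4 by simp
  then have "sqrt (2 * pi) \<le> 3" using real_sqrt_le_mono by fastforce
  then show ?thesis using e by (intro order.trans[OF mult_mono[OF e]]) auto
qed

text \<open>Integrate the density over the window [c, c + \<sigma>^2/c], on which it is at least its value at
  the right end.\<close>

lemma normal_density_window_lower_bound:
  assumes \<sigma>: "\<sigma> > 0" and c: "\<sigma> \<le> c"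
  shows "exp (- c\<^sup>2 / (2 * \<sigma>\<^sup>2)) * \<sigma> / (27 * c) \<le> normal_density 0 \<sigma> (c + \<sigma>\<^sup>2 / c) * (\<sigma>\<^sup>2 / c)"
proof -
  have c0: "c > 0" using \<sigma> c by simp
  define a where "a = c + \<sigma>\<^sup>2 / c"
  have "\<sigma>\<^sup>2 / c * (\<sigma>\<^sup>2 / c) \<le> \<sigma>\<^sup>2"
  proof -
    have "\<sigma>\<^sup>2 \<le> c\<^sup>2" using \<sigma> c by (intro power_mono) auto
    then have "\<sigma>\<^sup>2 * \<sigma>\<^sup>2 \<le> \<sigma>\<^sup>2 * c\<^sup>2" using \<sigma> by (intro mult_left_mono) auto
    then show ?thesis using c0 by (simp add: field_simps power2_eq_square)
  qed
  then have "a\<^sup>2 \<le> c\<^sup>2 + 3 * \<sigma>\<^sup>2"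
    using c0 by (simp add: a_def power2_sum field_simps power2_eq_square)
  then have "- (c\<^sup>2 + 3 * \<sigma>\<^sup>2) / (2 * \<sigma>\<^sup>2) \<le> - a\<^sup>2 / (2 * \<sigma>\<^sup>2)"
    using \<sigma> by (intro divide_right_mono) auto
  moreover have "- (c\<^sup>2 + 3 * \<sigma>\<^sup>2) / (2 * \<sigma>\<^sup>2) = - c\<^sup>2 / (2 * \<sigma>\<^sup>2) - 3/2"
    using \<sigma> by (simp add: field_simps)
  ultimately have exp_a: "exp (- c\<^sup>2 / (2 * \<sigma>\<^sup>2)) * exp (- (3/2)) \<le> exp (- a\<^sup>2 / (2 * \<sigma>\<^sup>2))"
    by (simp flip: exp_add)
  have sq: "sqrt (2 * pi * \<sigma>\<^sup>2) = sqrt (2 * pi) * \<sigma>"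
    using \<sigma> by (simp add: real_sqrt_mult)
  have "normal_density 0 \<sigma> a * (\<sigma>\<^sup>2 / c) = exp (- a\<^sup>2 / (2 * \<sigma>\<^sup>2)) * \<sigma> / (sqrt (2 * pi) * c)"
    unfolding normal_density_def sq using \<sigma> c0 by (simp add: field_simps power2_eq_square)
  also have "\<dots> \<ge> exp (- c\<^sup>2 / (2 * \<sigma>\<^sup>2)) * exp (- (3/2)) * \<sigma> / (sqrt (2 * pi) * c)"
    using exp_a \<sigma> c0 by (intro divide_right_mono mult_right_mono) auto
  finally have "exp (- c\<^sup>2 / (2 * \<sigma>\<^sup>2)) * \<sigma> / c * (exp (- (3/2)) / sqrt (2 * pi))
      \<le> normal_density 0 \<sigma> a * (\<sigma>\<^sup>2 / c)"
    by (simp add: field_simps)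
  moreover have "1 / 27 \<le> exp (- (3/2)) / sqrt (2 * pi)"
    using exp_three_halves_sqrt_2pi_le by (simp add: exp_minus field_simps)
  then have "exp (- c\<^sup>2 / (2 * \<sigma>\<^sup>2)) * \<sigma> / c * (1 / 27)
      \<le> exp (- c\<^sup>2 / (2 * \<sigma>\<^sup>2)) * \<sigma> / c * (exp (- (3/2)) / sqrt (2 * pi))"
    using \<sigma> c0 by (intro mult_left_mono) auto
  ultimately show ?thesis by (simp add: a_def)
qed

lemma normal_tail_lower_bound:
  assumes "prob_space M" and X: "distributed M lborel X (normal_density 0 \<sigma>)"
    and \<sigma>: "\<sigma> > 0" and c: "\<sigma> \<le> c"
  shows "exp (- c\<^sup>2 / (2 * \<sigma>\<^sup>2)) * \<sigma> / (27 * c) \<le> measure M {\<omega>\<in>space M. c \<le> X \<omega>}"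
proof -
  interpret prob_space M by fact
  have c0: "c > 0" using \<sigma> c by simp
  define h where "h = \<sigma>\<^sup>2 / c"
  have h0: "h > 0" using \<sigma> c0 by (simp add: h_def)
  define a where "a = c + h"
  have "ennreal (normal_density 0 \<sigma> a * h) = (\<integral>\<^sup>+x. ennreal (normal_density 0 \<sigma> a) * indicator {c..a} x \<partial>lborel)"
    using h0 by (simp add: nn_integral_cmult_indicator a_def ennreal_mult)
  also have "\<dots> \<le> (\<integral>\<^sup>+x. ennreal (normal_density 0 \<sigma> x) * indicator {c..a} x \<partial>lborel)"
  proof (intro nn_integral_mono)
    fix x
    show "ennreal (normal_density 0 \<sigma> a) * indicator {c..a} x \<le> ennreal (normal_density 0 \<sigma> x) * indicator {c..a} x"
    proof (cases "x \<in> {c..a}")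
      case True
      then have "x\<^sup>2 \<le> a\<^sup>2" using c0 by (intro power_mono) auto
      then have "- a\<^sup>2 / (2 * \<sigma>\<^sup>2) \<le> - x\<^sup>2 / (2 * \<sigma>\<^sup>2)" using \<sigma> by (intro divide_right_mono) auto
      then have "normal_density 0 \<sigma> a \<le> normal_density 0 \<sigma> x"
        unfolding normal_density_def by (intro mult_left_mono) auto
      then show ?thesis using True by (simp add: ennreal_leI)
    qed simp
  qed
  also have "\<dots> = emeasure M (X -` {c..a} \<inter> space M)"
    by (rule distributed_emeasure[OF X, symmetric]) simp
  also have "\<dots> \<le> emeasure M {\<omega>\<in>space M. c \<le> X \<omega>}"
  proof (rule emeasure_mono)
    show "X -` {c..a} \<inter> space M \<subseteq> {\<omega>\<in>space M. c \<le> X \<omega>}" by auto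
    show "{\<omega>\<in>space M. c \<le> X \<omega>} \<in> sets M"
      using distributed_measurable[OF X] by measurable
  qed
  finally have "normal_density 0 \<sigma> a * h \<le> measure M {\<omega>\<in>space M. c \<le> X \<omega>}"
    by (simp add: emeasure_eq_measure)
  with normal_density_window_lower_bound[OF \<sigma> c] show ?thesis by (simp add: a_def h_def)
qed

section \<open>A net of the unit sphere\<close>

lemma sum_exp_geometric_le:
  fixes l :: real
  assumes l: "l > 0"
  shows "(\<Sum>i\<in>{1..M}. exp (- l * real i)) \<le> 1 / l"
proof -
  define q where "q = exp (- l)"
  have q: "0 < q" "q < 1" using l by (auto simp: q_def)
  have "(\<Sum>i\<in>{1..M}. exp (- l * real i)) = (\<Sum>i\<in>{1..M}. q ^ i)"
    by (intro sum.cong refl) (simp add: q_def flip: exp_of_nat_mult)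
  also have "\<dots> \<le> q / (1 - q)"
  proof (cases "M = 0")
    case False
    then have "(\<Sum>i\<in>{1..M}. q ^ i) = (q - q ^ Suc M) / (1 - q)"
      using q by (subst sum_gp) auto
    also have "\<dots> \<le> q / (1 - q)" using q by (intro divide_right_mono) auto
    finally show ?thesis .
  qed (use q in simp)
  also have "\<dots> \<le> 1 / l"
  proof -
    have "q * (1 + l) \<le> 1"
      using exp_ge_add_one_self[of l] q by (simp add: q_def exp_minus field_simps)
    then show ?thesis using q l by (simp add: field_simps)
  qed
  finally show ?thesis .
qed

lemma sum_exp_square_int_le:
  fixes l :: real
  assumes l: "l > 0"
  shows "(\<Sum>z\<in>{-int M..int M}. exp (- l * (of_int z)\<^sup>2)) \<le> 1 + 2 / l"
proof -
  let ?f = "\<lambda>z::int. exp (- l * (of_int z)\<^sup>2)"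
  have split: "{-int M..int M} = uminus ` {1..int M} \<union> insert 0 {1..int M}"
    by (auto simp: image_iff intro: bexI[of _ "- _"])
  have "(\<Sum>z\<in>{-int M..int M}. ?f z) = (\<Sum>z\<in>uminus ` {1..int M}. ?f z) + (\<Sum>z\<in>insert 0 {1..int M}. ?f z)"
    unfolding split by (rule sum.union_disjoint) auto
  also have "(\<Sum>z\<in>uminus ` {1..int M}. ?f z) = (\<Sum>z\<in>{1..int M}. ?f z)"
    by (subst sum.reindex) (auto simp: inj_on_def)
  also have "(\<Sum>z\<in>insert 0 {1..int M}. ?f z) = 1 + (\<Sum>z\<in>{1..int M}. ?f z)"
    by simp
  also have "(\<Sum>z\<in>{1..int M}. ?f z) = (\<Sum>i\<in>{1..M}. ?f (int i))"
  proof -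
    have "{1..int M} = int ` {1..M}" by (simp add: image_int_atLeastAtMost)
    then show ?thesis by (simp add: sum.reindex)
  qed
  also have "\<dots> \<le> (\<Sum>i\<in>{1..M}. exp (- l * real i))"
  proof (intro sum_mono)
    fix i assume "i \<in> {1..M}"
    then have "real i \<le> (real i)\<^sup>2" by (simp add: power2_eq_square)
    then show "?f (int i) \<le> exp (- l * real i)" using l by simp
  qed
  also have "\<dots> \<le> 1 / l" by (rule sum_exp_geometric_le[OF l])
  finally show ?thesis by simp
qed

definition int_box :: "nat \<Rightarrow> nat \<Rightarrow> (nat \<Rightarrow> int) set" where
  "int_box n M = PiE {..<n} (\<lambda>_. {-int M..int M})"

lemma finite_int_box: "finite (int_box n M)"
  unfolding int_box_def by (intro finite_PiE) auto

text \<open>Counting lattice points in a ball by comparing the indicator of the ball with a Gaussian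
  weight exp (l (R - |k|^2)), which factorizes over the coordinates.\<close>

lemma card_int_box_sum_squares_le:
  fixes l R :: real
  assumes l: "l > 0"
  shows "real (card {k \<in> int_box n M. (\<Sum>j<n. (of_int (k j))\<^sup>2) \<le> R}) \<le> exp (l * R) * (1 + 2 / l) ^ n"
proof -
  define B where "B = {k \<in> int_box n M. (\<Sum>j<n. (of_int (k j) :: real)\<^sup>2) \<le> R}"
  define g where "g k = exp (l * (R - (\<Sum>j<n. (of_int (k j))\<^sup>2)))" for k :: "nat \<Rightarrow> int"
  have "real (card B) = (\<Sum>k\<in>B. 1)" by simp
  also have "\<dots> \<le> (\<Sum>k\<in>B. g k)"
  proof (intro sum_mono)
    fix k assume "k \<in> B"
    then have "0 \<le> l * (R - (\<Sum>j<n. (of_int (k j))\<^sup>2))" using l by (simp add: B_def)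
    then show "1 \<le> g k" by (simp add: g_def)
  qed
  also have "\<dots> \<le> (\<Sum>k\<in>int_box n M. g k)"
    using finite_int_box by (intro sum_mono2) (auto simp: B_def g_def)
  also have "\<dots> = (\<Sum>k\<in>int_box n M. exp (l * R) * (\<Prod>j<n. exp (- l * (of_int (k j))\<^sup>2)))"
  proof (intro sum.cong refl)
    fix k
    have "l * (R - (\<Sum>j<n. (of_int (k j))\<^sup>2)) = l * R + (\<Sum>j<n. - l * (of_int (k j))\<^sup>2)"
      by (simp add: sum_distrib_left right_diff_distrib sum_negf)
    then show "g k = exp (l * R) * (\<Prod>j<n. exp (- l * (of_int (k j))\<^sup>2))"
      by (simp add: g_def exp_add exp_sum)
  qed
  also have "\<dots> = exp (l * R) * (\<Prod>j<n. \<Sum>z\<in>{-int M..int M}. exp (- l * (of_int z)\<^sup>2))"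
  proof -
    have "(\<Prod>j<n. \<Sum>z\<in>{-int M..int M}. exp (- l * (of_int z)\<^sup>2)) =
          (\<Sum>k\<in>int_box n M. \<Prod>j<n. exp (- l * (of_int (k j))\<^sup>2))"
      unfolding int_box_def by (rule prod_sum_PiE[where f="\<lambda>_ z. exp (- l * (of_int z)\<^sup>2)"]) auto
    then show ?thesis by (simp add: sum_distrib_left)
  qed
  also have "\<dots> = exp (l * R) * (\<Sum>z\<in>{-int M..int M}. exp (- l * (of_int z)\<^sup>2)) ^ n"
    by simp
  also have "\<dots> \<le> exp (l * R) * (1 + 2 / l) ^ n"
    using sum_exp_square_int_le[OF l, of M]
    by (intro mult_left_mono power_mono) (auto intro: sum_nonneg)
  finally show ?thesis by (simp add: B_def)
qed

definition net_mesh :: "real \<Rightarrow> nat \<Rightarrow> nat" where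
  "net_mesh \<delta> n = nat \<lceil>sqrt (real n) / \<delta>\<rceil>"

definition grid_vec :: "nat \<Rightarrow> nat \<Rightarrow> (nat \<Rightarrow> int) \<Rightarrow> nat \<Rightarrow> real" where
  "grid_vec n m k = (\<lambda>j. if j < n then of_int (k j) / real m else 0)"

definition sphere_net :: "real \<Rightarrow> nat \<Rightarrow> (nat \<Rightarrow> real) set" where
  "sphere_net \<delta> n = grid_vec n (net_mesh \<delta> n) ` {k \<in> int_box n (2 * net_mesh \<delta> n).
      1 - \<delta> \<le> norm_n n (grid_vec n (net_mesh \<delta> n) k) \<and> norm_n n (grid_vec n (net_mesh \<delta> n) k) \<le> 1 + \<delta>}"

definition net_base :: "real \<Rightarrow> real" where
  "net_base \<delta> = exp 1 * (1 + 32 / \<delta>\<^sup>2)"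

lemma one_le_net_base: "1 \<le> net_base \<delta>"
proof -
  have "1 * 1 \<le> exp 1 * (1 + 32 / \<delta>\<^sup>2)" by (intro mult_mono) auto
  then show ?thesis by (simp add: net_base_def)
qed

lemma finite_sphere_net: "finite (sphere_net \<delta> n)"
  unfolding sphere_net_def using finite_int_box by auto

lemma norm_n_sphere_net: "u \<in> sphere_net \<delta> n \<Longrightarrow> 1 - \<delta> \<le> norm_n n u \<and> norm_n n u \<le> 1 + \<delta>"
  unfolding sphere_net_def by auto

context
  fixes \<delta> :: real and n :: nat
  assumes \<delta>: "0 < \<delta>" "\<delta> \<le> 1" and n: "n \<ge> 1"
begin

lemma net_mesh_bounds: "sqrt n / \<delta> \<le> net_mesh \<delta> n" "1 \<le> net_mesh \<delta> n" "net_mesh \<delta> n \<le> 2 * sqrt n / \<delta>"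
proof -
  have "\<delta> \<le> sqrt n" using n \<delta> by (smt (verit) of_nat_1 of_nat_mono real_sqrt_ge_1_iff)
  then have "1 \<le> sqrt n / \<delta>" using \<delta> by (simp add: field_simps)
  then show "sqrt n / \<delta> \<le> net_mesh \<delta> n" "1 \<le> net_mesh \<delta> n" "net_mesh \<delta> n \<le> 2 * sqrt n / \<delta>"
    unfolding net_mesh_def by linarith+
qed

lemma sphere_net_approx:
  assumes \<theta>: "norm_n n \<theta> = 1"
  shows "\<exists>u\<in>sphere_net \<delta> n. norm_n n (\<lambda>j. \<theta> j - u j) \<le> \<delta>"
proof -
  define m where "m = net_mesh \<delta> n"
  have m: "real m \<ge> 1" using net_mesh_bounds by (simp add: m_def)
  define k where "k = restrict (\<lambda>j. \<lfloor>real m * \<theta> j\<rfloor>) {..<n}"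
  define u where "u = grid_vec n m k"
  have err: "0 \<le> \<theta> j - u j \<and> \<theta> j - u j \<le> 1 / real m" if "j < n" for j
    using floor_grid_approx[of "real m" "\<theta> j"] m that by (simp add: u_def grid_vec_def k_def)
  have "k \<in> int_box n (2 * m)"
  proof -
    have "\<bar>real m * \<theta> j\<bar> \<le> real m" if "j < n" for j
      using abs_le_norm_n[OF that, of \<theta>] \<theta> m by (simp add: abs_mult mult_left_le)
    then have "- int (2 * m) \<le> \<lfloor>real m * \<theta> j\<rfloor> \<and> \<lfloor>real m * \<theta> j\<rfloor> \<le> int (2 * m)" if "j < n" for j
    proof -
      have "- real m - 1 < of_int \<lfloor>real m * \<theta> j\<rfloor>" "of_int \<lfloor>real m * \<theta> j\<rfloor> \<le> real m"
        using \<open>j < n \<Longrightarrow> \<bar>real m * \<theta> j\<bar> \<le> real m\<close>[OF that] by linarith+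
      then show ?thesis using m by linarith
    qed
    then show ?thesis by (auto simp: int_box_def k_def)
  qed
  moreover have dist: "norm_n n (\<lambda>j. \<theta> j - u j) \<le> \<delta>"
  proof -
    have "(\<Sum>j<n. (\<theta> j - u j)\<^sup>2) \<le> (\<Sum>j<n. (1 / real m)\<^sup>2)"
      using err by (intro sum_mono power_mono) auto
    then have "norm_n n (\<lambda>j. \<theta> j - u j) \<le> sqrt (real n / (real m)\<^sup>2)"
      unfolding norm_n_def by (simp add: power_divide real_sqrt_le_mono)
    also have "\<dots> = sqrt (real n) / real m" using m by (simp add: real_sqrt_divide)
    also have "\<dots> \<le> \<delta>" using net_mesh_bounds m \<delta> by (simp add: m_def field_simps)
    finally show ?thesis .
  qed
  moreover have "1 - \<delta> \<le> norm_n n u \<and> norm_n n u \<le> 1 + \<delta>"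
    using norm_n_triangle[of n u "\<lambda>j. \<theta> j - u j"] norm_n_triangle[of n \<theta> "\<lambda>j. u j - \<theta> j"]
      dist \<theta> norm_n_diff_commute[of n \<theta> u] by simp
  ultimately show ?thesis unfolding sphere_net_def u_def m_def by auto
qed

lemma card_sphere_net_le: "real (card (sphere_net \<delta> n)) \<le> net_base \<delta> ^ n"
proof -
  define m where "m = net_mesh \<delta> n"
  have m: "real m \<ge> 1" "real m \<le> 2 * sqrt n / \<delta>" using net_mesh_bounds by (simp_all add: m_def)
  define B where "B = {k \<in> int_box n (2 * m). (\<Sum>j<n. (of_int (k j))\<^sup>2) \<le> 4 * (real m)\<^sup>2}"
  have "sphere_net \<delta> n \<subseteq> grid_vec n m ` B"
  proof
    fix v assume "v \<in> sphere_net \<delta> n"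
    then obtain k where k: "k \<in> int_box n (2 * m)" "norm_n n (grid_vec n m k) \<le> 1 + \<delta>"
      and v: "v = grid_vec n m k"
      unfolding sphere_net_def m_def by blast
    have "(\<Sum>j<n. (of_int (k j))\<^sup>2) / (real m)\<^sup>2 = (norm_n n (grid_vec n m k))\<^sup>2"
      unfolding norm_n_power2 by (simp add: grid_vec_def power_divide sum_divide_distrib)
    also have "\<dots> \<le> 2\<^sup>2" using k \<delta> by (intro power_mono) auto
    finally have "k \<in> B" using k m by (simp add: B_def field_simps)
    then show "v \<in> grid_vec n m ` B" using v by blast
  qed
  moreover have "finite B" using finite_int_box by (simp add: B_def)
  ultimately have "card (sphere_net \<delta> n) \<le> card (grid_vec n m ` B)" by (intro card_mono) auto
  also have "\<dots> \<le> card B" using \<open>finite B\<close> by (rule card_image_le)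
  also have "real (card B) \<le> exp (real n) * (1 + 8 * (real m)\<^sup>2 / real n) ^ n"
    using card_int_box_sum_squares_le[of "real n / (4 * (real m)\<^sup>2)" n "2 * m" "4 * (real m)\<^sup>2"] n m
    by (simp add: B_def field_simps)
  also have "\<dots> \<le> exp (real n) * (1 + 32 / \<delta>\<^sup>2) ^ n"
  proof -
    have "(real m)\<^sup>2 \<le> (2 * sqrt n / \<delta>)\<^sup>2" using m by (intro power_mono) auto
    then have "8 * (real m)\<^sup>2 / real n \<le> 32 / \<delta>\<^sup>2" using n \<delta> by (simp add: power_divide field_simps)
    then show ?thesis by (intro mult_left_mono power_mono) auto
  qed
  also have "\<dots> = net_base \<delta> ^ n"
    by (simp add: net_base_def power_mult_distrib flip: exp_of_nat_mult)
  finally show ?thesis by simp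
qed

end

section \<open>From the net to all directions\<close>

lemma norm_n_le_from_sphere_net:
  assumes \<delta>: "0 < \<delta>" "\<delta> \<le> 1" and n: "n \<ge> 1" and b: "b \<ge> 0"
    and bound: "\<And>u. u \<in> sphere_net \<delta> n \<Longrightarrow> inner_n n v u \<le> b"
  shows "norm_n n v * (1 - \<delta>) \<le> b"
proof (cases "norm_n n v = 0")
  case False
  define w where "w = (\<lambda>j. v j / norm_n n v)"
  have "norm_n n w = 1" unfolding w_def by (rule norm_n_normalize[OF False])
  then obtain u where u: "u \<in> sphere_net \<delta> n" and uw: "norm_n n (\<lambda>j. w j - u j) \<le> \<delta>"
    using sphere_net_approx[OF \<delta> n] by blast
  have "inner_n n v w = inner_n n v v / norm_n n v"
    by (simp add: w_def inner_n_def sum_divide_distrib)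
  also have "\<dots> = norm_n n v"
    using False by (simp add: inner_n_self power2_eq_square)
  moreover have "inner_n n v (\<lambda>j. w j - u j) \<le> norm_n n v * \<delta>"
    using inner_n_le[of n v "\<lambda>j. w j - u j"] mult_left_mono[OF uw norm_n_nonneg[of n v]] by linarith
  moreover have "inner_n n v (\<lambda>j. w j - u j) = inner_n n v w - inner_n n v u"
    by (rule inner_n_diff_right)
  ultimately show ?thesis using bound[OF u] by (simp add: algebra_simps)
qed (use b in simp)

text \<open>If every net direction u has n sample points far out (t \<le> x i \<bullet> u), while no n sample
  points have a large sum in any net direction, then the sum v of those n points has norm O(B n),
  so moving from u to a nearby unit vector \<theta> costs at most B n \<delta> / (1 - \<delta>).\<close>

lemma support_unit_from_sphere_net:
  fixes x :: "nat \<Rightarrow> nat \<Rightarrow> real"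
  assumes \<delta>: "0 < \<delta>" "\<delta> \<le> 1/4" and n: "n \<ge> 1" and B: "B \<ge> 0"
    and r: "r \<le> t - B * \<delta> / (1 - \<delta>)"
    and many_large: "\<And>u. u \<in> sphere_net \<delta> n \<Longrightarrow> \<exists>S\<subseteq>{..<N}. card S = n \<and> (\<forall>i\<in>S. t \<le> inner_n n (x i) u)"
    and sums_small: "\<And>S u. S \<subseteq> {..<N} \<Longrightarrow> card S = n \<Longrightarrow> u \<in> sphere_net \<delta> n \<Longrightarrow>
                        (\<Sum>i\<in>S. inner_n n (x i) u) < B * n"
    and \<theta>: "norm_n n \<theta> = 1"
  shows "\<exists>i<N. r \<le> inner_n n (x i) \<theta>"
proof -
  have \<delta>1: "\<delta> \<le> 1" using \<delta> by simp
  obtain u where u: "u \<in> sphere_net \<delta> n" and \<theta>u: "norm_n n (\<lambda>j. \<theta> j - u j) \<le> \<delta>"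
    using sphere_net_approx[OF \<delta>(1) \<delta>1 n \<theta>] by blast
  obtain S where S: "S \<subseteq> {..<N}" "card S = n" and large: "\<forall>i\<in>S. t \<le> inner_n n (x i) u"
    using many_large[OF u] by blast
  define v where "v = (\<lambda>j. \<Sum>i\<in>S. x i j)"
  have inner_v: "inner_n n v w = (\<Sum>i\<in>S. inner_n n (x i) w)" for w
    unfolding v_def by (rule inner_n_sum_left)
  have "norm_n n v * (1 - \<delta>) \<le> B * n"
    using sums_small[OF S] B by (intro norm_n_le_from_sphere_net[OF \<delta>(1) \<delta>1 n]) (auto simp: inner_v less_imp_le)
  then have "norm_n n v \<le> B * n / (1 - \<delta>)"
    using \<delta> by (simp add: field_simps)
  then have v: "norm_n n v * \<delta> \<le> B * n * \<delta> / (1 - \<delta>)"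
    using mult_right_mono[of _ _ \<delta>] \<delta> by fastforce
  have "n * t \<le> inner_n n v u"
    using sum_mono[of S "\<lambda>_. t"] large S by (simp add: inner_v)
  moreover have "- (norm_n n v * \<delta>) \<le> inner_n n v (\<lambda>j. \<theta> j - u j)"
    using abs_inner_n_le[of n v "\<lambda>j. \<theta> j - u j"] mult_left_mono[OF \<theta>u norm_n_nonneg[of n v]] by linarith
  moreover have "inner_n n v (\<lambda>j. \<theta> j - u j) = inner_n n v \<theta> - inner_n n v u"
    by (rule inner_n_diff_right)
  moreover have "n * r \<le> n * t - B * n * \<delta> / (1 - \<delta>)"
    using mult_left_mono[OF r, of n] by (simp add: algebra_simps)
  ultimately have sum_ge: "(\<Sum>i\<in>S. r) \<le> (\<Sum>i\<in>S. inner_n n (x i) \<theta>)"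
    using v S by (simp add: inner_v)
  show ?thesis
  proof (rule ccontr)
    assume "\<not> ?thesis"
    then have "\<forall>i\<in>S. inner_n n (x i) \<theta> < r" using S by auto
    moreover have "finite S" "S \<noteq> {}" using S n by (auto intro: finite_subset)
    ultimately have "(\<Sum>i\<in>S. inner_n n (x i) \<theta>) < (\<Sum>i\<in>S. r)"
      by (intro sum_strict_mono) auto
    then show False using sum_ge by linarith
  qed
qed

lemma support_from_sphere_net:
  fixes x :: "nat \<Rightarrow> nat \<Rightarrow> real"
  assumes \<delta>: "0 < \<delta>" "\<delta> \<le> 1/4" and n: "n \<ge> 1" and N: "N \<ge> 1" and B: "B \<ge> 0"
    and r: "r \<le> t - B * \<delta> / (1 - \<delta>)"
    and many_large: "\<And>u. u \<in> sphere_net \<delta> n \<Longrightarrow> \<exists>S\<subseteq>{..<N}. card S = n \<and> (\<forall>i\<in>S. t \<le> inner_n n (x i) u)"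
    and sums_small: "\<And>S u. S \<subseteq> {..<N} \<Longrightarrow> card S = n \<Longrightarrow> u \<in> sphere_net \<delta> n \<Longrightarrow>
                        (\<Sum>i\<in>S. inner_n n (x i) u) < B * n"
  shows "\<exists>i<N. r * norm_n n \<theta> \<le> inner_n n (x i) \<theta>"
proof (cases "norm_n n \<theta> = 0")
  case True
  then show ?thesis using N by (intro exI[of _ 0]) (auto simp: inner_n_eq_0_if_norm_n_eq_0)
next
  case False
  obtain i where i: "i < N" and "r \<le> inner_n n (x i) (\<lambda>j. \<theta> j / norm_n n \<theta>)"
    using support_unit_from_sphere_net[OF \<delta> n B r many_large sums_small norm_n_normalize[OF False]]
    by blast
  moreover have "inner_n n (x i) (\<lambda>j. \<theta> j / norm_n n \<theta>) = inner_n n (x i) \<theta> / norm_n n \<theta>"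
    by (simp add: inner_n_def sum_divide_distrib)
  ultimately have "r * norm_n n \<theta> \<le> inner_n n (x i) \<theta>"
    using False norm_n_nonneg[of n \<theta>] by (simp add: pos_le_divide_eq)
  then show ?thesis using i by blast
qed

lemma many_above_or_many_below:
  fixes g :: "nat \<Rightarrow> real"
  assumes "n \<le> N"
  shows "(\<exists>S\<subseteq>{..<N}. card S = n \<and> (\<forall>i\<in>S. t \<le> g i)) \<or>
         (\<exists>T\<subseteq>{..<N}. card T = N - n + 1 \<and> (\<forall>i\<in>T. g i < t))"
proof (cases "n \<le> card {i\<in>{..<N}. t \<le> g i}")
  case True
  then obtain S where "S \<subseteq> {i\<in>{..<N}. t \<le> g i}" "card S = n" by (rule obtain_subset_with_card_n)
  then show ?thesis by auto
next
  case False
  have "{i\<in>{..<N}. g i < t} = {..<N} - {i\<in>{..<N}. t \<le> g i}" by auto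
  then have "card {i\<in>{..<N}. g i < t} = N - card {i\<in>{..<N}. t \<le> g i}"
    using card_Diff_subset[of "{i\<in>{..<N}. t \<le> g i}" "{..<N}"] by auto
  then have "N - n + 1 \<le> card {i\<in>{..<N}. g i < t}" using False assms by simp
  then obtain T where "T \<subseteq> {i\<in>{..<N}. g i < t}" "card T = N - n + 1" by (rule obtain_subset_with_card_n)
  then show ?thesis by auto
qed

lemma ball_subset_conv_pts_from_sphere_net:
  fixes x :: "nat \<Rightarrow> nat \<Rightarrow> real"
  assumes \<delta>: "0 < \<delta>" "\<delta> \<le> 1/4" and n: "n \<ge> 1" "n \<le> N" and B: "B \<ge> 0"
    and r: "r \<le> t - B * \<delta> / (1 - \<delta>)"
    and few_below: "\<And>u T. u \<in> sphere_net \<delta> n \<Longrightarrow> T \<subseteq> {..<N} \<Longrightarrow> card T = N - n + 1 \<Longrightarrow>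
                      \<not> (\<forall>i\<in>T. inner_n n (x i) u < t)"
    and sums_small: "\<And>S u. S \<subseteq> {..<N} \<Longrightarrow> card S = n \<Longrightarrow> u \<in> sphere_net \<delta> n \<Longrightarrow>
                        (\<Sum>i\<in>S. inner_n n (x i) u) < B * n"
  shows "subset_n n (ball_n n r) (conv_pts n N x)"
proof -
  have "\<exists>S\<subseteq>{..<N}. card S = n \<and> (\<forall>i\<in>S. t \<le> inner_n n (x i) u)" if "u \<in> sphere_net \<delta> n" for u
    using many_above_or_many_below[OF n(2), of t "\<lambda>i. inner_n n (x i) u"] few_below[OF that] by blast
  then have "\<exists>i<N. r * norm_n n \<theta> \<le> inner_n n (x i) \<theta>" for \<theta>
    using n by (intro support_from_sphere_net[OF \<delta> n(1) _ B r _ sums_small]) auto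
  then show ?thesis
    using n by (intro ball_subset_conv_pts_if_support) auto
qed

section \<open>Probability estimates\<close>

lemma measure_UNION_le_card_mult:
  fixes b :: real
  assumes "finite I" and "\<And>i. i \<in> I \<Longrightarrow> A i \<in> sets M" and "\<And>i. i \<in> I \<Longrightarrow> measure M (A i) \<le> b"
  shows "measure M (\<Union>i\<in>I. A i) \<le> card I * b"
  using order.trans[OF measure_UNION_le[OF assms(1,2)] sum_mono[OF assms(3)]] by simp

lemma measure_gauss_sample_all_below:
  assumes T: "T \<subseteq> {..<N}"
  shows "measure (gauss_sample n N) {x\<in>space (gauss_sample n N). \<forall>i\<in>T. inner_n n (x i) u < t}
       = measure (std_gauss n) {y\<in>space (std_gauss n). inner_n n y u < t} ^ card T"
proof -
  interpret product_prob_space "\<lambda>_::nat. std_gauss n" "{..<N}"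
    by (rule product_prob_spaceI[OF prob_space_std_gauss])
  define H where "H = {y\<in>space (std_gauss n). inner_n n y u < t}"
  have H: "H \<in> sets (std_gauss n)"
    unfolding H_def using borel_measurable_inner_n_std_gauss by measurable
  have "{x\<in>space (gauss_sample n N). \<forall>i\<in>T. inner_n n (x i) u < t}
      = {x\<in>space (PiM {..<N} (\<lambda>_. std_gauss n)). \<forall>i\<in>T. x i \<in> H}"
    using T by (auto simp: gauss_sample_def H_def space_PiM PiE_iff)
  moreover have "emeasure (PiM {..<N} (\<lambda>_. std_gauss n)) {x\<in>space (PiM {..<N} (\<lambda>_. std_gauss n)). \<forall>i\<in>T. x i \<in> H}
      = ennreal (measure (std_gauss n) H ^ card T)"
    using T finite_subset[OF T] H
    by (simp add: emeasure_PiM_Collect M.emeasure_eq_measure prod_ennreal ennreal_power)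
  ultimately show ?thesis
    by (simp add: gauss_sample_def H_def P.emeasure_eq_measure)
qed

lemma prob_all_below_le:
  assumes T: "T \<subseteq> {..<N}"
    and q: "q \<le> measure (std_gauss n) {y\<in>space (std_gauss n). t \<le> inner_n n y u}"
  shows "measure (gauss_sample n N) {x\<in>space (gauss_sample n N). \<forall>i\<in>T. inner_n n (x i) u < t}
       \<le> (1 - q) ^ card T"
proof -
  interpret prob_space "std_gauss n" by (rule prob_space_std_gauss)
  have sets: "{y\<in>space (std_gauss n). t \<le> inner_n n y u} \<in> sets (std_gauss n)"
    using borel_measurable_inner_n_std_gauss by measurable
  have compl: "space (std_gauss n) - {y\<in>space (std_gauss n). t \<le> inner_n n y u}
      = {y\<in>space (std_gauss n). inner_n n y u < t}" by auto
  have "measure (std_gauss n) {y\<in>space (std_gauss n). inner_n n y u < t}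
      = 1 - measure (std_gauss n) {y\<in>space (std_gauss n). t \<le> inner_n n y u}"
    using prob_compl[OF sets] unfolding compl .
  then show ?thesis
    unfolding measure_gauss_sample_all_below[OF T] using q prob_le_1 by (intro power_mono) auto
qed

lemma prob_sum_inner_n_ge_le:
  assumes S: "S \<subseteq> {..<N}" "card S = n" and n: "n \<ge> 1"
    and u: "0 < norm_n n u" "(norm_n n u)\<^sup>2 \<le> 2" and B: "B \<ge> 0"
  shows "measure (gauss_sample n N) {x\<in>space (gauss_sample n N). B * n \<le> (\<Sum>i\<in>S. inner_n n (x i) u)}
       \<le> exp (- B\<^sup>2 * n / 4)"
proof -
  define \<sigma> where "\<sigma> = sqrt (card S) * norm_n n u"
  have "S \<noteq> {}" using S n by auto
  then have \<sigma>: "\<sigma> > 0" using S u n by (simp add: \<sigma>_def)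
  have "\<sigma>\<^sup>2 = n * (norm_n n u)\<^sup>2" using S by (simp add: \<sigma>_def power_mult_distrib)
  then have "B\<^sup>2 * n / 4 * (2 * \<sigma>\<^sup>2) = B\<^sup>2 * n * n * (norm_n n u)\<^sup>2 / 2"
    by (simp add: field_simps)
  also have "\<dots> \<le> B\<^sup>2 * n * n * 2 / 2"
    using u(2) by (intro divide_right_mono mult_left_mono) auto
  finally have "B\<^sup>2 * n / 4 * (2 * \<sigma>\<^sup>2) \<le> (B * n)\<^sup>2"
    by (simp add: power2_eq_square mult_ac)
  then have "B\<^sup>2 * n / 4 \<le> (B * n)\<^sup>2 / (2 * \<sigma>\<^sup>2)"
    using \<sigma> by (subst pos_le_divide_eq) auto
  then have "exp (- (B * n)\<^sup>2 / (2 * \<sigma>\<^sup>2)) \<le> exp (- B\<^sup>2 * n / 4)" by simp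
  moreover have "measure (gauss_sample n N) {x\<in>space (gauss_sample n N). B * n \<le> (\<Sum>i\<in>S. inner_n n (x i) u)}
      \<le> exp (- (B * n)\<^sup>2 / (2 * \<sigma>\<^sup>2))"
    unfolding \<sigma>_def using B
    by (intro normal_tail_upper_bound prob_space_gauss_sample distributed_sum_inner_n_gauss_sample S
        \<open>S \<noteq> {}\<close> u(1) \<sigma>[unfolded \<sigma>_def]) auto
  ultimately show ?thesis by linarith
qed

lemma prob_inner_n_ge_lower_bound:
  assumes a: "0 < a" "a \<le> norm_n n u" and s: "s \<ge> 1"
  shows "exp (- s\<^sup>2 / 2) / (27 * s) \<le> measure (std_gauss n) {y\<in>space (std_gauss n). s * a \<le> inner_n n y u}"
proof -
  interpret prob_space "std_gauss n" by (rule prob_space_std_gauss)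
  define \<sigma> where "\<sigma> = norm_n n u"
  have \<sigma>: "\<sigma> > 0" using a by (simp add: \<sigma>_def)
  have "exp (- s\<^sup>2 / 2) / (27 * s) = exp (- (s * \<sigma>)\<^sup>2 / (2 * \<sigma>\<^sup>2)) * \<sigma> / (27 * (s * \<sigma>))"
    using \<sigma> by (simp add: power_mult_distrib field_simps)
  also have "\<dots> \<le> measure (std_gauss n) {y\<in>space (std_gauss n). s * \<sigma> \<le> inner_n n y u}"
    using \<sigma> s unfolding \<sigma>_def
    by (intro normal_tail_lower_bound prob_space_std_gauss distributed_inner_n_std_gauss) auto
  also have "\<dots> \<le> measure (std_gauss n) {y\<in>space (std_gauss n). s * a \<le> inner_n n y u}"
  proof (rule finite_measure_mono)
    have "s * a \<le> s * \<sigma>" using a s by (intro mult_left_mono) (auto simp: \<sigma>_def)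
    then show "{y\<in>space (std_gauss n). s * \<sigma> \<le> inner_n n y u} \<subseteq> {y\<in>space (std_gauss n). s * a \<le> inner_n n y u}"
      by auto
    show "{y\<in>space (std_gauss n). s * a \<le> inner_n n y u} \<in> sets (std_gauss n)"
      using borel_measurable_inner_n_std_gauss by measurable
  qed
  finally show ?thesis .
qed

definition few_above_event :: "nat \<Rightarrow> nat \<Rightarrow> real \<Rightarrow> real \<Rightarrow> (nat \<Rightarrow> nat \<Rightarrow> real) set" where
  "few_above_event n N \<delta> t = (\<Union>(u, T) \<in> sphere_net \<delta> n \<times> {T. T \<subseteq> {..<N} \<and> card T = N - n + 1}.
     {x \<in> space (gauss_sample n N). \<forall>i\<in>T. inner_n n (x i) u < t})"

definition large_sum_event :: "nat \<Rightarrow> nat \<Rightarrow> real \<Rightarrow> real \<Rightarrow> (nat \<Rightarrow> nat \<Rightarrow> real) set" where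
  "large_sum_event n N \<delta> B = (\<Union>(S, u) \<in> {S. S \<subseteq> {..<N} \<and> card S = n} \<times> sphere_net \<delta> n.
     {x \<in> space (gauss_sample n N). B * n \<le> (\<Sum>i\<in>S. inner_n n (x i) u)})"

lemma few_above_event_bound:
  assumes q: "\<And>u. u \<in> sphere_net \<delta> n \<Longrightarrow> q \<le> measure (std_gauss n) {y\<in>space (std_gauss n). t \<le> inner_n n y u}"
  shows "few_above_event n N \<delta> t \<in> sets (gauss_sample n N)"
    and "measure (gauss_sample n N) (few_above_event n N \<delta> t)
         \<le> card (sphere_net \<delta> n) * (real (N choose (N - n + 1)) * (1 - q) ^ (N - n + 1))"
proof -
  let ?I = "sphere_net \<delta> n \<times> {T. T \<subseteq> {..<N} \<and> card T = N - n + 1}"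
  have fin: "finite ?I" using finite_sphere_net by (auto intro: finite_subset[of _ "Pow {..<N}"])
  have sets: "(case p of (u, T) \<Rightarrow> {x \<in> space (gauss_sample n N). \<forall>i\<in>T. inner_n n (x i) u < t})
      \<in> sets (gauss_sample n N)" if "p \<in> ?I" for p
    using that finite_subset[of _ "{..<N}"]
    by (auto intro!: sets.sets_Collect_finite_All borel_measurable_less borel_measurable_inner_n_gauss_sample)
  with fin show "few_above_event n N \<delta> t \<in> sets (gauss_sample n N)"
    unfolding few_above_event_def by (intro sets.finite_UN) auto
  have "measure (gauss_sample n N) (few_above_event n N \<delta> t) \<le> card ?I * (1 - q) ^ (N - n + 1)"
    unfolding few_above_event_def
  proof (intro measure_UNION_le_card_mult fin sets)
    fix p assume "p \<in> ?I"
    then obtain u T where p: "p = (u, T)" "u \<in> sphere_net \<delta> n" "T \<subseteq> {..<N}" "card T = N - n + 1"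
      by auto
    show "measure (gauss_sample n N)
        (case p of (u, T) \<Rightarrow> {x \<in> space (gauss_sample n N). \<forall>i\<in>T. inner_n n (x i) u < t})
        \<le> (1 - q) ^ (N - n + 1)"
      unfolding p(1) prod.case p(4)[symmetric] by (rule prob_all_below_le[OF p(3) q[OF p(2)]])
  qed
  then show "measure (gauss_sample n N) (few_above_event n N \<delta> t)
      \<le> card (sphere_net \<delta> n) * (real (N choose (N - n + 1)) * (1 - q) ^ (N - n + 1))"
    by (simp add: card_cartesian_product n_subsets)
qed

lemma large_sum_event_bound:
  assumes n: "n \<ge> 1" and \<delta>: "0 < \<delta>" "\<delta> \<le> 1/4" and B: "B \<ge> 0"
  shows "large_sum_event n N \<delta> B \<in> sets (gauss_sample n N)"
    and "measure (gauss_sample n N) (large_sum_event n N \<delta> B)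
         \<le> card (sphere_net \<delta> n) * (real (N choose n) * exp (- B\<^sup>2 * n / 4))"
proof -
  let ?I = "{S. S \<subseteq> {..<N} \<and> card S = n} \<times> sphere_net \<delta> n"
  have fin: "finite ?I" using finite_sphere_net by (auto intro: finite_subset[of _ "Pow {..<N}"])
  have sets: "(case p of (S, u) \<Rightarrow> {x \<in> space (gauss_sample n N). B * n \<le> (\<Sum>i\<in>S. inner_n n (x i) u)})
      \<in> sets (gauss_sample n N)" if "p \<in> ?I" for p
    using that by (auto intro!: borel_measurable_le borel_measurable_sum borel_measurable_inner_n_gauss_sample)
  with fin show "large_sum_event n N \<delta> B \<in> sets (gauss_sample n N)"
    unfolding large_sum_event_def by (intro sets.finite_UN) auto
  have "measure (gauss_sample n N) (large_sum_event n N \<delta> B) \<le> card ?I * exp (- B\<^sup>2 * n / 4)"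
    unfolding large_sum_event_def
  proof (intro measure_UNION_le_card_mult fin sets)
    fix p assume "p \<in> ?I"
    then obtain S u where p: "p = (S, u)" and S: "S \<subseteq> {..<N}" "card S = n" and u: "u \<in> sphere_net \<delta> n"
      by auto
    have "1 - \<delta> \<le> norm_n n u" "norm_n n u \<le> 5/4"
      using norm_n_sphere_net[OF u] \<delta> by auto
    moreover from this have "(norm_n n u)\<^sup>2 \<le> (5/4)\<^sup>2" by (intro power_mono) auto
    then have "(norm_n n u)\<^sup>2 \<le> 2" by (simp add: power_divide)
    ultimately show "measure (gauss_sample n N)
        (case p of (S, u) \<Rightarrow> {x \<in> space (gauss_sample n N). B * n \<le> (\<Sum>i\<in>S. inner_n n (x i) u)})
        \<le> exp (- B\<^sup>2 * n / 4)"
      unfolding p prod.case using \<delta> by (intro prob_sum_inner_n_ge_le[OF S n _ _ B]) auto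
  qed
  then show "measure (gauss_sample n N) (large_sum_event n N \<delta> B)
      \<le> card (sphere_net \<delta> n) * (real (N choose n) * exp (- B\<^sup>2 * n / 4))"
    by (simp add: card_cartesian_product n_subsets mult_ac)
qed

lemma prob_ball_subset_conv_pts_ge:
  fixes n N :: nat
  assumes n: "n \<ge> 1" "n \<le> N" and \<delta>: "0 < \<delta>" "\<delta> \<le> 1/4" and B: "B \<ge> 0"
    and r: "0 \<le> r" "r \<le> t - B * \<delta> / (1 - \<delta>)"
    and q: "\<And>u. u \<in> sphere_net \<delta> n \<Longrightarrow> q \<le> measure (std_gauss n) {y\<in>space (std_gauss n). t \<le> inner_n n y u}"
  shows "1 - real (card (sphere_net \<delta> n)) * (real (N choose (N - n + 1)) * (1 - q) ^ (N - n + 1)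
           + real (N choose n) * exp (- B\<^sup>2 * n / 4))
         \<le> measure (gauss_sample n N) {x \<in> space (gauss_sample n N). subset_n n (ball_n n r) (conv_pts n N x)}"
proof -
  interpret P: prob_space "gauss_sample n N" by (rule prob_space_gauss_sample)
  define E where "E = {x \<in> space (gauss_sample n N). subset_n n (ball_n n r) (conv_pts n N x)}"
  have "space (gauss_sample n N) - E \<subseteq> few_above_event n N \<delta> t \<union> large_sum_event n N \<delta> B"
  proof
    fix x assume x: "x \<in> space (gauss_sample n N) - E"
    show "x \<in> few_above_event n N \<delta> t \<union> large_sum_event n N \<delta> B"
    proof (rule ccontr)
      assume "x \<notin> few_above_event n N \<delta> t \<union> large_sum_event n N \<delta> B"
      then have "subset_n n (ball_n n r) (conv_pts n N x)"
        using x by (intro ball_subset_conv_pts_from_sphere_net[OF \<delta> n B r(2)])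
          (auto simp: few_above_event_def large_sum_event_def not_le)
      then show False using x by (simp add: E_def)
    qed
  qed
  then have "P.prob (space (gauss_sample n N) - E)
      \<le> P.prob (few_above_event n N \<delta> t) + P.prob (large_sum_event n N \<delta> B)"
    using few_above_event_bound(1)[where N = N and \<delta> = \<delta>, OF q] large_sum_event_bound(1)[where N = N, OF n(1) \<delta> B]
    by (meson P.finite_measure_mono measure_Un_le order_trans sets.Un)
  moreover have "E \<in> sets (gauss_sample n N)"
    unfolding E_def using n r by (intro sets_gauss_sample_ball_subset_conv_pts) auto
  then have "P.prob E = 1 - P.prob (space (gauss_sample n N) - E)"
    using P.prob_compl by simp
  ultimately show ?thesis
    using few_above_event_bound(2)[where N = N and \<delta> = \<delta>, OF q] large_sum_event_bound(2)[where N = N, OF n(1) \<delta> B]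
    unfolding E_def distrib_left by linarith
qed

section \<open>Choice of the parameters\<close>

lemma power_div_fact_le_exp:
  fixes x :: real
  assumes "0 \<le> x"
  shows "x ^ k / fact k \<le> exp x"
proof -
  have exp: "(\<lambda>i. x ^ i / fact i) sums exp x"
    using exp_converges[of x] by (simp add: divide_inverse mult.commute)
  have "(\<Sum>i\<in>{k}. x ^ i / fact i) \<le> (\<Sum>i. x ^ i / fact i)"
    using assms exp by (intro sum_le_suminf) (auto simp: sums_summable)
  then show ?thesis using sums_unique[OF exp] by simp
qed

lemma binomial_le_exp_mult_power:
  assumes n: "1 \<le> n" "n \<le> N" and k: "k \<le> n"
  shows "real (N choose k) \<le> exp (real n) * (N / n) ^ n"
proof -
  have "real ((N choose k) * fact k) \<le> real (N ^ k)"
    by (simp only: of_nat_le_iff binomial_fact_pow)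
  then have "real (N choose k) \<le> real N ^ k / fact k"
    by (simp add: field_simps)
  also have "\<dots> = (N / n) ^ k * (real n ^ k / fact k)"
    using n by (simp add: power_divide field_simps)
  also have "\<dots> \<le> (N / n) ^ n * exp (real n)"
    using n k by (intro mult_mono power_increasing power_div_fact_le_exp) auto
  finally show ?thesis by (simp add: mult.commute)
qed

lemma one_minus_power_le_exp:
  fixes q :: real
  assumes "0 \<le> q" "q \<le> 1"
  shows "(1 - q) ^ m \<le> exp (- (q * m))"
proof (cases "m = 0")
  case False
  then show ?thesis
    using exp_ge_one_minus_x_over_n_power_n[of "q * m" m] assms by (simp add: mult_left_le_one_le)
qed simp

text \<open>Both binomial coefficients are at most (e N/n)^n; together with the net factor K^n this is
  exp (n (\<Lambda> - 2)), and each of the two tails is at most exp (- n \<Lambda>).\<close>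

lemma failure_probability_le:
  fixes n N :: nat and K X q B \<Lambda> :: real
  assumes n: "1 \<le> n" "2 * n \<le> N" and K: "0 < K" and X: "0 \<le> X" "X \<le> K ^ n" and q: "0 \<le> q" "q \<le> 1"
    and \<Lambda>: "\<Lambda> = ln (N / n) + ln K + 3" and q\<Lambda>: "2 * \<Lambda> \<le> q * (N / n)" and B: "B\<^sup>2 = 4 * \<Lambda>"
  shows "X * (real (N choose (N - n + 1)) * (1 - q) ^ (N - n + 1) + real (N choose n) * exp (- B\<^sup>2 * n / 4))
         \<le> exp (- real n)"
proof -
  define m where "m = N - n + 1"
  define \<rho> where "\<rho> = real N / real n"
  have \<rho>: "\<rho> > 0" using n by (simp add: \<rho>_def)
  have "K ^ n = exp (n * ln K)" "\<rho> ^ n = exp (n * ln \<rho>)"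
    using K \<rho> by (simp_all add: exp_of_nat_mult)
  then have "K ^ n * (exp (real n) * \<rho> ^ n) = exp (n * ln K + n + n * ln \<rho>)"
    by (simp add: exp_add)
  also have "n * ln K + n + n * ln \<rho> = n * (\<Lambda> - 2)"
    by (simp add: \<Lambda> \<rho>_def algebra_simps)
  finally have "K ^ n * (exp (real n) * \<rho> ^ n) = exp (n * (\<Lambda> - 2))" .
  then have main: "K ^ n * (exp (real n) * \<rho> ^ n) * exp (- real n * \<Lambda>) = exp (- 2 * real n)"
    by (simp flip: exp_add add: algebra_simps)
  have binom: "real (N choose m) \<le> exp (real n) * \<rho> ^ n" "real (N choose n) \<le> exp (real n) * \<rho> ^ n"
    using binomial_le_exp_mult_power[of n N "n - 1"] binomial_le_exp_mult_power[of n N n] n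
      binomial_symmetric[of m N] by (simp_all add: m_def \<rho>_def Suc_diff_le)
  have "(1 - q) ^ m \<le> exp (- (q * m))" using q by (rule one_minus_power_le_exp)
  also have "\<dots> \<le> exp (- real n * \<Lambda>)"
  proof -
    have "n * \<Lambda> \<le> q * (n * \<rho>) / 2" using q\<Lambda> n by (simp add: \<rho>_def field_simps)
    also have "\<dots> \<le> q * m"
    proof -
      have "real (2 * n) \<le> real N" using n(2) by (simp only: of_nat_le_iff)
      moreover have "real m = real N - real n + 1" using n by (simp add: m_def of_nat_diff)
      ultimately have "n * \<rho> / 2 \<le> m" using n by (simp add: \<rho>_def)
      then show ?thesis using q mult_left_mono[of "n * \<rho> / 2" m q] by simp
    qed
    finally show ?thesis by simp
  qed
  finally have power_le: "(1 - q) ^ m \<le> exp (- real n * \<Lambda>)" .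
  have "exp (- B\<^sup>2 * n / 4) = exp (- real n * \<Lambda>)" by (simp add: B)
  then have "X * (real (N choose m) * (1 - q) ^ m + real (N choose n) * exp (- B\<^sup>2 * n / 4))
      \<le> K ^ n * (exp (real n) * \<rho> ^ n * exp (- real n * \<Lambda>) + exp (real n) * \<rho> ^ n * exp (- real n * \<Lambda>))"
    using X binom power_le q by (intro mult_mono add_mono) auto
  also have "\<dots> = 2 * exp (- 2 * real n)" using main by (simp add: algebra_simps)
  also have "\<dots> \<le> exp (- real n)"
  proof -
    have "2 \<le> exp (real n)" using n exp_ge_add_one_self[of "real n"] by linarith
    then have "2 * exp (- 2 * real n) \<le> exp (real n) * exp (- 2 * real n)" by (intro mult_right_mono) auto
    also have "\<dots> = exp (- real n)" by (simp flip: exp_add)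
    finally show ?thesis .
  qed
  finally show ?thesis by (simp add: m_def)
qed

lemma prob_ball_subset_conv_pts_ge_exp:
  fixes n N :: nat
  assumes n: "1 \<le> n" and L: "1 \<le> L" "exp L = N / n" and \<delta>: "0 < \<delta>" "\<delta> \<le> 1/4"
    and s: "1 \<le> s" and r: "0 \<le> r"
    and r_le: "r \<le> s * (1 - \<delta>) - 2 * sqrt (L + ln (net_base \<delta>) + 3) * \<delta> / (1 - \<delta>)"
    and \<Lambda>_le: "2 * (L + ln (net_base \<delta>) + 3) \<le> exp (- s\<^sup>2 / 2) / (27 * s) * exp L"
  shows "1 - exp (- real n)
         \<le> measure (gauss_sample n N) {x \<in> space (gauss_sample n N). subset_n n (ball_n n r) (conv_pts n N x)}"
proof -
  define \<Lambda> where "\<Lambda> = L + ln (net_base \<delta>) + 3"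
  define q where "q = exp (- s\<^sup>2 / 2) / (27 * s)"
  define B where "B = 2 * sqrt \<Lambda>"
  have q: "0 \<le> q" "q \<le> 1"
  proof -
    have "exp (- s\<^sup>2 / 2) \<le> 1" "1 \<le> 27 * s" using s by auto
    then have "exp (- s\<^sup>2 / 2) \<le> 27 * s" by linarith
    then show "q \<le> 1" unfolding q_def using s by (simp add: divide_le_eq_1)
    show "0 \<le> q" using s by (simp add: q_def)
  qed
  have "2 \<le> real N / real n" using L exp_ge_add_one_self[of L] by linarith
  then have N: "2 * n \<le> N" using n by (simp add: field_simps flip: of_nat_le_iff)
  have "L = ln (N / n)" using L by (metis ln_exp)
  then have \<Lambda>: "\<Lambda> = ln (N / n) + ln (net_base \<delta>) + 3" by (simp add: \<Lambda>_def)
  have "0 \<le> \<Lambda>" using L one_le_net_base[of \<delta>] by (simp add: \<Lambda>_def)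
  then have B: "0 \<le> B" "B\<^sup>2 = 4 * \<Lambda>" by (simp_all add: B_def power_mult_distrib)
  have "q \<le> measure (std_gauss n) {y\<in>space (std_gauss n). s * (1 - \<delta>) \<le> inner_n n y u}"
    if "u \<in> sphere_net \<delta> n" for u
    unfolding q_def using norm_n_sphere_net[OF that] \<delta> s by (intro prob_inner_n_ge_lower_bound) auto
  then have "1 - real (card (sphere_net \<delta> n)) * (real (N choose (N - n + 1)) * (1 - q) ^ (N - n + 1)
           + real (N choose n) * exp (- B\<^sup>2 * n / 4))
         \<le> measure (gauss_sample n N) {x \<in> space (gauss_sample n N). subset_n n (ball_n n r) (conv_pts n N x)}"
    using n N \<delta> r r_le by (intro prob_ball_subset_conv_pts_ge B) (auto simp: B_def \<Lambda>_def mult.assoc)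
  moreover have "real (card (sphere_net \<delta> n)) * (real (N choose (N - n + 1)) * (1 - q) ^ (N - n + 1)
           + real (N choose n) * exp (- B\<^sup>2 * n / 4)) \<le> exp (- real n)"
  proof (rule failure_probability_le[OF n N _ _ _ q \<Lambda> _ B(2)])
    show "0 < net_base \<delta>" using one_le_net_base[of \<delta>] by linarith
    show "real (card (sphere_net \<delta> n)) \<le> net_base \<delta> ^ n"
      using card_sphere_net_le \<delta> n by simp
    show "2 * \<Lambda> \<le> q * (N / n)" using \<Lambda>_le L by (simp add: \<Lambda>_def q_def)
  qed simp
  ultimately show ?thesis by linarith
qed

lemma eventually_linear_le_exp_div_sqrt:
  fixes a b c :: real
  assumes "0 < a" "0 < b"
  shows "\<forall>\<^sub>F L in at_top. 2 * (L + c) \<le> exp (b * L) / (27 * sqrt (a * L))"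
  using assms by real_asymp

lemma net_error_le:
  fixes \<alpha> \<alpha>' \<delta> c L :: real
  assumes \<alpha>: "0 \<le> \<alpha>" "\<alpha>' \<le> 2" and \<delta>: "8 * \<delta> = \<alpha>' - \<alpha>" "0 < \<delta>" "\<delta> \<le> 1/4"
    and L: "0 \<le> c" "c \<le> L" "1 \<le> L"
  shows "\<alpha> * sqrt L \<le> \<alpha>' * sqrt L * (1 - \<delta>) - 2 * sqrt (L + c) * \<delta> / (1 - \<delta>)"
proof -
  have sqrt_le: "2 * sqrt (L + c) \<le> 3 * sqrt L"
  proof -
    have sq: "(2 * sqrt (L + c))\<^sup>2 = 4 * (L + c)" "(3 * sqrt L)\<^sup>2 = 9 * L"
      using L by (simp_all add: power_mult_distrib)
    have "(2 * sqrt (L + c))\<^sup>2 \<le> (3 * sqrt L)\<^sup>2" unfolding sq using L by (simp add: distrib_left)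
    then show ?thesis by (rule power2_le_imp_le) (use L in simp)
  qed
  have "\<delta> / (1 - \<delta>) \<le> \<delta> / (1/2)" using \<delta> by (intro divide_left_mono) auto
  then have \<delta>_frac: "\<delta> / (1 - \<delta>) \<le> 2 * \<delta>" by simp
  have "2 * sqrt (L + c) * (\<delta> / (1 - \<delta>)) \<le> 3 * sqrt L * (2 * \<delta>)"
    using mult_mono[OF sqrt_le \<delta>_frac] \<delta> L by simp
  then have error: "2 * sqrt (L + c) * \<delta> / (1 - \<delta>) \<le> 6 * \<delta> * sqrt L" by (simp add: mult_ac)
  have "\<alpha>' * \<delta> \<le> 2 * \<delta>" using \<alpha> \<delta> by (intro mult_right_mono) auto
  then have "\<alpha> \<le> \<alpha>' * (1 - \<delta>) - 6 * \<delta>"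
    unfolding right_diff_distrib mult_1_right using \<delta> by linarith
  then have "\<alpha> * sqrt L \<le> (\<alpha>' * (1 - \<delta>) - 6 * \<delta>) * sqrt L"
    by (rule mult_right_mono) (use L in simp)
  then show ?thesis using error by (simp add: algebra_simps)
qed

text \<open>With s = sqrt (2 (1 - \<epsilon>/2) L) the lower tail q = exp (-s^2/2) / (27 s) of a net direction
  satisfies q e^L = e^(\<epsilon> L/2) / (27 s), which beats every linear function of L; the slack between
  1 - \<epsilon> and 1 - \<epsilon>/2 pays for the net error via a small \<delta>.\<close>

lemma hull_parameters_exist:
  fixes \<epsilon> :: real
  assumes \<epsilon>: "0 < \<epsilon>" "\<epsilon> < 1"
  obtains \<delta> L\<^sub>0 where "0 < \<delta>" "\<delta> \<le> 1/4" "1 \<le> L\<^sub>0"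
    and "\<And>L. L\<^sub>0 \<le> L \<Longrightarrow> 1 \<le> sqrt (2 * (1 - \<epsilon>/2) * L)"
    and "\<And>L. L\<^sub>0 \<le> L \<Longrightarrow> sqrt (2 * (1 - \<epsilon>) * L)
           \<le> sqrt (2 * (1 - \<epsilon>/2) * L) * (1 - \<delta>) - 2 * sqrt (L + ln (net_base \<delta>) + 3) * \<delta> / (1 - \<delta>)"
    and "\<And>L. L\<^sub>0 \<le> L \<Longrightarrow> 2 * (L + ln (net_base \<delta>) + 3)
           \<le> exp (- (sqrt (2 * (1 - \<epsilon>/2) * L))\<^sup>2 / 2) / (27 * sqrt (2 * (1 - \<epsilon>/2) * L)) * exp L"
proof -
  define \<alpha> where "\<alpha> = sqrt (2 * (1 - \<epsilon>))"
  define \<alpha>' where "\<alpha>' = sqrt (2 * (1 - \<epsilon>/2))"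
  define \<delta> where "\<delta> = (\<alpha>' - \<alpha>) / 8"
  define c where "c = ln (net_base \<delta>) + 3"
  have \<alpha>: "0 \<le> \<alpha>" "\<alpha> < \<alpha>'" "\<alpha>' \<le> 2"
    using \<epsilon> real_sqrt_le_mono[of "2 * (1 - \<epsilon>/2)" 4] by (auto simp: \<alpha>_def \<alpha>'_def)
  have \<delta>: "0 < \<delta>" "\<delta> \<le> 1/4" "8 * \<delta> = \<alpha>' - \<alpha>" using \<alpha> by (auto simp: \<delta>_def)
  have c: "0 \<le> c" using one_le_net_base[of \<delta>] by (simp add: c_def)
  obtain L\<^sub>1 where L\<^sub>1: "\<And>L. L\<^sub>1 \<le> L \<Longrightarrow> 2 * (L + c) \<le> exp (\<epsilon>/2 * L) / (27 * sqrt (2 * (1 - \<epsilon>/2) * L))"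
    using eventually_linear_le_exp_div_sqrt[of "2 * (1 - \<epsilon>/2)" "\<epsilon>/2" c] \<epsilon>
    by (auto simp: eventually_at_top_linorder)
  show ?thesis
  proof (rule that[of \<delta> "max (max 1 c) L\<^sub>1"])
    fix L assume "max (max 1 c) L\<^sub>1 \<le> L"
    then have L: "1 \<le> L" "c \<le> L" "L\<^sub>1 \<le> L" by auto
    have "1 * 1 \<le> 2 * (1 - \<epsilon>/2) * L" using \<epsilon> L by (intro mult_mono) auto
    then show "1 \<le> sqrt (2 * (1 - \<epsilon>/2) * L)" by simp
    have "sqrt (2 * (1 - \<epsilon>) * L) = \<alpha> * sqrt L" "sqrt (2 * (1 - \<epsilon>/2) * L) = \<alpha>' * sqrt L"
      by (simp_all add: \<alpha>_def \<alpha>'_def real_sqrt_mult)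
    then show "sqrt (2 * (1 - \<epsilon>) * L)
        \<le> sqrt (2 * (1 - \<epsilon>/2) * L) * (1 - \<delta>) - 2 * sqrt (L + ln (net_base \<delta>) + 3) * \<delta> / (1 - \<delta>)"
      using net_error_le[OF \<alpha>(1,3) \<delta>(3,1,2) c L(2,1)] by (simp add: c_def add.assoc)
    have "(sqrt (2 * (1 - \<epsilon>/2) * L))\<^sup>2 = 2 * (1 - \<epsilon>/2) * L" using \<epsilon> L by simp
    then have "- (sqrt (2 * (1 - \<epsilon>/2) * L))\<^sup>2 / 2 + L = \<epsilon>/2 * L" by (simp add: algebra_simps)
    then have "exp (- (sqrt (2 * (1 - \<epsilon>/2) * L))\<^sup>2 / 2) / (27 * sqrt (2 * (1 - \<epsilon>/2) * L)) * exp L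
        = exp (\<epsilon>/2 * L) / (27 * sqrt (2 * (1 - \<epsilon>/2) * L))"
      by (simp add: exp_add[symmetric])
    moreover have "2 * (L + ln (net_base \<delta>) + 3) = 2 * (L + c)" by (simp add: c_def)
    ultimately show "2 * (L + ln (net_base \<delta>) + 3)
        \<le> exp (- (sqrt (2 * (1 - \<epsilon>/2) * L))\<^sup>2 / 2) / (27 * sqrt (2 * (1 - \<epsilon>/2) * L)) * exp L"
      using L\<^sub>1[OF L(3)] by linarith
  qed (use \<delta> in auto)
qed

theorem theorem3p6:
  fixes \<epsilon> :: real
  assumes "0 < \<epsilon>" and "\<epsilon> < 1"
  shows "\<exists>C > 0. \<forall>n N :: nat. n \<ge> 1 \<longrightarrow> real N \<ge> C * real n \<longrightarrow>
           measure (gauss_sample n N)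
             {x \<in> space (gauss_sample n N).
                subset_n n (ball_n n (sqrt (2 * ln (real N / real n) * (1 - \<epsilon>))))
                           (conv_pts n N x)}
           \<ge> 1 - exp (- real n)"
proof (rule hull_parameters_exist[OF assms], goal_cases)
  case (1 \<delta> L\<^sub>0)
  note \<delta> = "1"(1,2) and L\<^sub>0 = "1"(3) and params = "1"(4-6)
  show ?thesis
  proof (intro exI[of _ "exp L\<^sub>0"] conjI allI impI)
    fix n N :: nat
    assume n: "n \<ge> 1" and N: "exp L\<^sub>0 * n \<le> N"
    define L where "L = ln (N / n)"
    have \<rho>: "exp L\<^sub>0 \<le> N / n" using n N by (simp add: field_simps)
    then have "0 < N / n" using exp_gt_zero[of L\<^sub>0] by linarith
    then have exp_L: "exp L = N / n" by (simp add: L_def)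
    have L: "L\<^sub>0 \<le> L" using \<rho> unfolding exp_L[symmetric] by simp
    have "sqrt (2 * (1 - \<epsilon>) * L) = sqrt (2 * ln (N / n) * (1 - \<epsilon>))" by (simp add: L_def mult_ac)
    moreover have "0 \<le> sqrt (2 * (1 - \<epsilon>) * L)" using assms L L\<^sub>0 by simp
    ultimately show "1 - exp (- real n) \<le> measure (gauss_sample n N)
        {x \<in> space (gauss_sample n N). subset_n n (ball_n n (sqrt (2 * ln (N / n) * (1 - \<epsilon>)))) (conv_pts n N x)}"
      using prob_ball_subset_conv_pts_ge_exp[OF n _ exp_L \<delta> params(1)[OF L] _ params(2,3)[OF L]] L L\<^sub>0 by simp
  qed simp
qed

end
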